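(* There are finite languages $L_1, L_2$ with regular expressions of length $O(n)$ such that (a) $\mathrm{rpn}(L_1 \cap L_2) \geq n^{\Omega(\log n)}$, (b) $\mathrm{rpn}(\operatorname{shuffle}(L_1, L_2)) \geq n^{\Omega(\log n)}$. There is a regular language $L \subseteq \Sigma^*$ with regular expressions of length $O(n)$, such that (c) $\mathrm{rpn}(L \cap \Sigma^n) \geq n^{\Omega(\log n)}$.
   Context: Regular expressions are built from $\emptyset$, $\epsilon$, letters of an alphabet $\Sigma$, union $(+)$, concatenation $(\cdot)$ and star $(^* )$. The length $\mathrm{rpn}(R)$ of an expression $R$ is its reverse polish length, i.e., the number of nodes in its syntax tree; for a regular language $L$, $\mathrm{rpn}(L)$ is the length of a shortest expression describing $L$. The shuffle (interleaving) of two words $v,w$ is the set of all words of the form $v_1 w_1 v_2 w_2 \cdots v_k w_k$ with $k\in\mathbb{N}$, $v_i,w_i\in\Sigma^*$, $v_1\cdots v_k = v$ and $w_1\cdots w_k = w$; the shuffle of two languages is $\operatorname{shuffle}(L_1,L_2)=\bigcup_{v\in L_1, w\in L_2}\operatorname{shuffle}(v,w)$. *)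

theory Defs
  imports Complex_Main
begin

datatype 'a rexp = Zero | One | Atom 'a | Plus "'a rexp" "'a rexp"
  | Times "'a rexp" "'a rexp" | Star "'a rexp"

definition conc :: "'a list set \<Rightarrow> 'a list set \<Rightarrow> 'a list set" where
  "conc A B = {u @ v | u v. u \<in> A \<and> v \<in> B}"

inductive_set star :: "'a list set \<Rightarrow> 'a list set" for A where
  star_Nil: "[] \<in> star A"
| star_app: "u \<in> A \<Longrightarrow> v \<in> star A \<Longrightarrow> u @ v \<in> star A"

fun lang :: "'a rexp \<Rightarrow> 'a list set" where
  "lang Zero = {}"
| "lang One = {[]}"
| "lang (Atom a) = {[a]}"
| "lang (Plus r s) = lang r \<union> lang s"
| "lang (Times r s) = conc (lang r) (lang s)"
| "lang (Star r) = star (lang r)"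

text \<open>Reverse polish length = number of nodes of the syntax tree.\<close>
fun rpn_len :: "'a rexp \<Rightarrow> nat" where
  "rpn_len Zero = 1"
| "rpn_len One = 1"
| "rpn_len (Atom a) = 1"
| "rpn_len (Plus r s) = rpn_len r + rpn_len s + 1"
| "rpn_len (Times r s) = rpn_len r + rpn_len s + 1"
| "rpn_len (Star r) = rpn_len r + 1"

text \<open>Length of a shortest expression describing L (meaningful for regular L).\<close>
definition rpn :: "'a list set \<Rightarrow> nat" where
  "rpn L = (LEAST k. \<exists>r. lang r = L \<and> rpn_len r = k)"

definition shuffle_lang :: "'a list set \<Rightarrow> 'a list set \<Rightarrow> 'a list set" where
  "shuffle_lang L1 L2 = (\<Union>v\<in>L1. \<Union>w\<in>L2. shuffles v w)"

end

theory Submission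
  imports Defs "HOL-Library.Multiset" "HOL-Library.Countable" "HOL-Library.Discrete_Functions"
begin

text \<open>
  All lower bounds come from the language of words of length \<open>l\<close> over \<open>{..<W}\<close> whose letter sum
  is fixed modulo \<open>W\<close>. By induction over expressions, a product splits the length as \<open>l1 + l2\<close>;
  the shorter factor contributes at most \<open>W ^ (l2 - 1)\<close> words and raises \<open>floor_log\<close> by at most
  one, so every expression for the language has at least \<open>W ^ floor_log l\<close> symbols. Letter
  homomorphisms, and the restriction to words whose letters carry consecutive positions, do not
  increase the size of an expression, so it suffices to map each of the three languages onto
  this one. For (a) and (c) the words are padded sequences of blocks \<open>Mark j # replicate j Pad\<close>,
  and the total length fixes the sum of the \<open>j\<close> modulo \<open>W\<close>. For (b) the words of the first
  language leave one slot free in each of \<open>2 * m + 1\<close> windows and those of the second fill one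
  slot per window; interleavings that list all positions in order force both to use the same
  free slots \<open>q 0, \<dots>, q (2 * m)\<close>, and the data they carry are the differences of \<open>q\<close>, which
  sum to \<open>q (2 * m) - q 0 = 0\<close>. Taking \<open>W = 2 ^ (floor_log n div 4)\<close> and \<open>l = W\<close> gives
  expressions of size \<open>O(W ^ 4) = O(n)\<close> and the bound \<open>W ^ floor_log W \<ge> n powr (ln n / 64)\<close>.
\<close>

lemma sum_list_le_length_mult: "\<forall>x\<in>set xs. x \<le> c \<Longrightarrow> sum_list xs \<le> length xs * (c::nat)"
  by (induction xs) auto

lemma concat_replicate_replicate: "concat (replicate t (replicate k a)) = replicate (t * k) a"
  by (induction t) (simp_all add: replicate_add)

lemma concat_map_pairs:
  "concat (map (\<lambda>i. f (2 * i + c) @ f (2 * i + c + 1)) [0..<m]) = concat (map f [c..<2 * m + c])"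
  by (induction m) (simp_all add: ac_simps)

lemma upt_split_at: "a \<le> c \<Longrightarrow> c < b \<Longrightarrow> [a..<b] = [a..<c] @ c # [Suc c..<b]"
  using upt_add_eq_append[of a c "b - c"] by (simp add: upt_conv_Cons)

lemma map_plus_upt: "map ((+) n) [a..<b] = [n + a..<n + b]"
  by (induction b) simp_all

lemma shuffles_append:
  "z1 \<in> shuffles x1 y1 \<Longrightarrow> z2 \<in> shuffles x2 y2 \<Longrightarrow> z1 @ z2 \<in> shuffles (x1 @ x2) (y1 @ y2)"
proof (induction z1 arbitrary: x1 y1)
  case (Cons a z1)
  from Cons.prems(1) consider x1' where "x1 = a # x1'" "z1 \<in> shuffles x1' y1"
    | y1' where "y1 = a # y1'" "z1 \<in> shuffles x1 y1'"
    by (auto simp: Cons_in_shuffles_iff neq_Nil_conv)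
  then show ?case
    by cases (auto intro: Cons_in_shuffles_leftI Cons_in_shuffles_rightI Cons.IH[OF _ Cons.prems(2)])
qed simp

lemma shuffles_map: "shuffles (map g xs) (map g ys) = map g ` shuffles xs ys"
  by (induction xs ys rule: shuffles.induct) (auto simp: image_Un image_image)

lemma shuffle_lang_map: "shuffle_lang (map g ` A) (map g ` B) = map g ` shuffle_lang A B"
  by (auto simp: shuffle_lang_def shuffles_map)

lemma finite_shuffle_lang: "finite A \<Longrightarrow> finite B \<Longrightarrow> finite (shuffle_lang A B)"
  by (simp add: shuffle_lang_def)

lemma map_image_length_slice: "{w \<in> map f ` A. length w = n} = map f ` {w \<in> A. length w = n}"
  by auto

lemma conc_eq_image: "conc A B = (\<lambda>(u, v). u @ v) ` (A \<times> B)"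
  by (auto simp: conc_def)

lemma conc_empty [simp]: "conc {} B = {}" "conc A {} = {}"
  by (simp_all add: conc_def)

lemma finite_conc: "finite A \<Longrightarrow> finite B \<Longrightarrow> finite (conc A B)"
  by (simp add: conc_eq_image)

lemma card_conc_le: "finite A \<Longrightarrow> finite B \<Longrightarrow> card (conc A B) \<le> card A * card B"
  unfolding conc_eq_image by (metis card_cartesian_product card_image_le finite_cartesian_product)

fun star_free :: "'a rexp \<Rightarrow> bool" where
  "star_free (Star r) = False"
| "star_free (Plus r s) = (star_free r \<and> star_free s)"
| "star_free (Times r s) = (star_free r \<and> star_free s)"
| "star_free _ = True"

lemma finite_lang_star_free: "star_free r \<Longrightarrow> finite (lang r)"
  by (induction r) (auto intro: finite_conc)

fun word_rexp :: "'a list \<Rightarrow> 'a rexp" where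
  "word_rexp [] = One"
| "word_rexp (a # w) = Times (Atom a) (word_rexp w)"

lemma lang_word_rexp [simp]: "lang (word_rexp w) = {w}"
  by (induction w) (auto simp: conc_def)

lemma rpn_len_word_rexp [simp]: "rpn_len (word_rexp w) = 2 * length w + 1"
  by (induction w) auto

lemma star_free_word_rexp [simp]: "star_free (word_rexp w)"
  by (induction w) auto

definition sum_rexp :: "'a rexp list \<Rightarrow> 'a rexp" where
  "sum_rexp rs = foldr Plus rs Zero"

lemma lang_sum_rexp [simp]: "lang (sum_rexp rs) = (\<Union>r\<in>set rs. lang r)"
  by (induction rs) (auto simp: sum_rexp_def)

lemma rpn_len_sum_rexp: "rpn_len (sum_rexp rs) = (\<Sum>r\<leftarrow>rs. rpn_len r + 1) + 1"
  by (induction rs) (auto simp: sum_rexp_def)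

lemma star_free_sum_rexp [simp]: "star_free (sum_rexp rs) \<longleftrightarrow> (\<forall>r\<in>set rs. star_free r)"
  by (induction rs) (auto simp: sum_rexp_def)

definition words_rexp :: "'a list list \<Rightarrow> 'a rexp" where
  "words_rexp ws = sum_rexp (map word_rexp ws)"

lemma lang_words_rexp [simp]: "lang (words_rexp ws) = set ws"
  by (auto simp: words_rexp_def)

lemma rpn_len_words_rexp: "rpn_len (words_rexp ws) = (\<Sum>w\<leftarrow>ws. 2 * length w + 2) + 1"
  by (simp add: words_rexp_def rpn_len_sum_rexp comp_def)

lemma star_free_words_rexp [simp]: "star_free (words_rexp ws)"
  by (simp add: words_rexp_def)

definition prod_rexp :: "'a rexp list \<Rightarrow> 'a rexp" where
  "prod_rexp rs = foldr Times rs One"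

lemma lang_prod_rexp: "lang (prod_rexp rs) = {concat ws | ws. list_all2 (\<lambda>w r. w \<in> lang r) ws rs}"
proof (induction rs)
  case (Cons r rs)
  show ?case
  proof (intro set_eqI iffI)
    fix w assume "w \<in> lang (prod_rexp (r # rs))"
    then obtain u ws where "w = concat (u # ws)" "u \<in> lang r" "list_all2 (\<lambda>w r. w \<in> lang r) ws rs"
      using Cons.IH by (auto simp: prod_rexp_def conc_def)
    then show "w \<in> {concat ws | ws. list_all2 (\<lambda>w r. w \<in> lang r) ws (r # rs)}" by blast
  qed (use Cons.IH in \<open>fastforce simp: prod_rexp_def conc_def list_all2_Cons2\<close>)
qed (simp add: prod_rexp_def)

lemma rpn_len_prod_rexp: "rpn_len (prod_rexp rs) = (\<Sum>r\<leftarrow>rs. rpn_len r + 1) + 1"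
  by (induction rs) (auto simp: prod_rexp_def)

lemma star_free_prod_rexp [simp]: "star_free (prod_rexp rs) \<longleftrightarrow> (\<forall>r\<in>set rs. star_free r)"
  by (induction rs) (auto simp: prod_rexp_def)

lemma lang_prod_rexp_replicate:
  "lang (prod_rexp (replicate k r)) = {concat ws | ws. length ws = k \<and> set ws \<subseteq> lang r}"
proof -
  have "list_all2 (\<lambda>w r. w \<in> lang r) ws (replicate k r) \<longleftrightarrow> length ws = k \<and> set ws \<subseteq> lang r" for ws
    by (auto simp: list_all2_conv_all_nth set_conv_nth)
  then show ?thesis by (simp add: lang_prod_rexp)
qed

lemma lang_prod_rexp_upt:
  "lang (prod_rexp (map B [0..<m])) = {concat (map ws [0..<m]) | ws. \<forall>i<m. ws i \<in> lang (B i)}"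
proof -
  have "list_all2 (\<lambda>w r. w \<in> lang r) vs (map B [0..<m]) \<longleftrightarrow>
      (\<exists>ws. vs = map ws [0..<m] \<and> (\<forall>i<m. ws i \<in> lang (B i)))" for vs
  proof
    assume "list_all2 (\<lambda>w r. w \<in> lang r) vs (map B [0..<m])"
    then show "\<exists>ws. vs = map ws [0..<m] \<and> (\<forall>i<m. ws i \<in> lang (B i))"
      by (intro exI[of _ "(!) vs"]) (auto simp: list_all2_conv_all_nth intro: nth_equalityI)
  qed (auto simp: list_all2_conv_all_nth)
  then show ?thesis by (auto simp: lang_prod_rexp)
qed

lemma star_singleton: "star {u} = {concat (replicate t u) | t. True}"
proof (intro subset_antisym subsetI)
  fix w assume "w \<in> star {u}"
  then show "w \<in> {concat (replicate t u) | t. True}"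
  proof (induction rule: star.induct)
    case star_Nil
    show ?case by (auto intro: exI[of _ 0])
  next
    case (star_app u' v)
    then obtain t where "v = concat (replicate t u)" by blast
    with star_app.hyps(1) show ?case by (auto intro: exI[of _ "Suc t"])
  qed
next
  fix w assume "w \<in> {concat (replicate t u) | t. True}"
  then obtain t where "w = concat (replicate t u)" by blast
  then show "w \<in> star {u}" by (induction t arbitrary: w) (auto intro: star.intros)
qed

lemma rpn_len_words_rexp_le:
  assumes "\<forall>w\<in>set ws. length w \<le> k"
  shows "rpn_len (words_rexp ws) \<le> length ws * ((2 * k + 1) + 1) + 1"
proof -
  have "(\<Sum>w\<leftarrow>ws. 2 * length w + 2) \<le> length ws * (2 * k + 2)"
    using assms by (induction ws) auto
  then show ?thesis by (simp add: rpn_len_words_rexp)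
qed

lemma rpn_len_prod_rexp_le:
  assumes "\<forall>r\<in>set rs. rpn_len r \<le> k"
  shows "rpn_len (prod_rexp rs) \<le> length rs * (k + 1) + 1"
proof -
  have "(\<Sum>r\<leftarrow>rs. rpn_len r + 1) \<le> length rs * (k + 1)"
    using assms by (induction rs) auto
  then show ?thesis by (simp add: rpn_len_prod_rexp)
qed

lemma finite_imp_ex_rexp: "finite L \<Longrightarrow> \<exists>r. lang r = L"
  by (metis finite_list lang_words_rexp)

lemma rpn_attained: "finite L \<Longrightarrow> \<exists>r. lang r = L \<and> rpn_len r = rpn L"
  unfolding rpn_def by (rule LeastI_ex) (use finite_imp_ex_rexp in blast)

lemma le_rpn: "finite L \<Longrightarrow> (\<And>r. lang r = L \<Longrightarrow> B \<le> rpn_len r) \<Longrightarrow> B \<le> rpn L"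
  by (metis rpn_attained)

section \<open>Letter homomorphisms\<close>

text \<open>A letter map \<open>f\<close> deletes every word containing a letter with \<open>f a = None\<close>, erases letters
  with \<open>f a = Some None\<close> and renames letters with \<open>f a = Some (Some b)\<close>.\<close>

fun hom_rexp :: "('a \<Rightarrow> 'b option option) \<Rightarrow> 'a rexp \<Rightarrow> 'b rexp" where
  "hom_rexp f Zero = Zero"
| "hom_rexp f One = One"
| "hom_rexp f (Atom a) = (case f a of None \<Rightarrow> Zero | Some None \<Rightarrow> One | Some (Some b) \<Rightarrow> Atom b)"
| "hom_rexp f (Plus r s) = Plus (hom_rexp f r) (hom_rexp f s)"
| "hom_rexp f (Times r s) = Times (hom_rexp f r) (hom_rexp f s)"
| "hom_rexp f (Star r) = Star (hom_rexp f r)"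

definition hom_letter :: "('a \<Rightarrow> 'b option option) \<Rightarrow> 'a \<Rightarrow> 'b list" where
  "hom_letter f a = (case f a of Some (Some b) \<Rightarrow> [b] | _ \<Rightarrow> [])"

definition hom_word :: "('a \<Rightarrow> 'b option option) \<Rightarrow> 'a list \<Rightarrow> 'b list" where
  "hom_word f w = concat (map (hom_letter f) w)"

definition hom_dom :: "('a \<Rightarrow> 'b option option) \<Rightarrow> 'a set" where
  "hom_dom f = {a. f a \<noteq> None}"

lemma hom_word_simps [simp]:
  "hom_word f [] = []" "hom_word f (a # w) = hom_letter f a @ hom_word f w"
  "hom_word f (u @ v) = hom_word f u @ hom_word f v"
  by (simp_all add: hom_word_def)

lemma rpn_len_hom_rexp [simp]: "rpn_len (hom_rexp f r) = rpn_len r"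
  by (induction r) (auto split: option.splits)

lemma hom_word_in_star:
  "w \<in> star A \<Longrightarrow> w \<in> lists D \<Longrightarrow> hom_word f w \<in> star (hom_word f ` (A \<inter> lists D))"
  by (induction rule: star.induct) (auto intro: star.intros)

lemma star_hom_word_image:
  "w \<in> star (hom_word f ` (A \<inter> lists D)) \<Longrightarrow> w \<in> hom_word f ` (star A \<inter> lists D)"
proof (induction rule: star.induct)
  case star_Nil
  show ?case by (rule image_eqI[of _ _ "[]"]) (auto intro: star.intros)
next
  case (star_app u v)
  then obtain u' v' where "u = hom_word f u'" "u' \<in> A \<inter> lists D"
    "v = hom_word f v'" "v' \<in> star A \<inter> lists D" by blast
  then show ?case by (intro image_eqI[of _ _ "u' @ v'"]) (auto intro: star.intros)
qed

lemma lang_hom_rexp: "lang (hom_rexp f r) = hom_word f ` (lang r \<inter> lists (hom_dom f))"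
proof (induction r)
  case (Atom a)
  show ?case
    by (cases "f a") (auto simp: hom_dom_def hom_letter_def split: option.splits)
next
  case (Times r s)
  show ?case
  proof (intro set_eqI iffI)
    fix w assume "w \<in> lang (hom_rexp f (Times r s))"
    then obtain u v where "w = hom_word f u @ hom_word f v"
      "u \<in> lang r \<inter> lists (hom_dom f)" "v \<in> lang s \<inter> lists (hom_dom f)"
      using Times.IH by (auto simp: conc_def)
    then show "w \<in> hom_word f ` (lang (Times r s) \<inter> lists (hom_dom f))"
      by (intro image_eqI[of _ _ "u @ v"]) (auto simp: conc_def)
  next
    fix w assume "w \<in> hom_word f ` (lang (Times r s) \<inter> lists (hom_dom f))"
    then obtain u v where "w = hom_word f u @ hom_word f v"
      "u \<in> lang r \<inter> lists (hom_dom f)" "v \<in> lang s \<inter> lists (hom_dom f)"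
      by (auto simp: conc_def) blast
    then show "w \<in> lang (hom_rexp f (Times r s))"
      using Times.IH by (auto simp: conc_def)
  qed
next
  case (Star r)
  show ?case
    using Star.IH hom_word_in_star[of _ "lang r" "hom_dom f" f]
      star_hom_word_image[of _ f "lang r" "hom_dom f"] by auto
qed auto

lemma lang_hom_rexp_rename: "lang (hom_rexp (\<lambda>a. Some (Some (g a))) r) = map g ` lang r"
proof -
  have "hom_word (\<lambda>a. Some (Some (g a))) w = map g w" for w
    by (induction w) (simp_all add: hom_letter_def)
  then show ?thesis by (simp add: lang_hom_rexp hom_dom_def)
qed

lemma lang_hom_rexp_restrict:
  "lang (hom_rexp (\<lambda>a. if a \<in> A then Some (Some a) else None) r) = lang r \<inter> lists A"
proof -
  have "hom_word (\<lambda>a. if a \<in> A then Some (Some a) else None) w = w" if "w \<in> lists A" for w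
    using that by (induction w) (simp_all add: hom_letter_def)
  moreover have "hom_dom (\<lambda>a. if a \<in> A then Some (Some a) else None) = A"
    by (simp add: hom_dom_def)
  ultimately show ?thesis by (force simp: lang_hom_rexp)
qed

lemma rpn_map_inj:
  assumes "inj g"
  shows "rpn (map g ` L) = rpn L"
proof -
  define h where "h b = (if b \<in> range g then Some (Some (inv g b)) else None)" for b
  have h_map: "hom_word h (map g w) = w" for w
    by (induction w) (simp_all add: h_def hom_letter_def assms)
  have h_lang: "lang (hom_rexp h r) = L" if "lang r = map g ` L" for r
  proof -
    have "map g ` L \<subseteq> lists (hom_dom h)" by (auto simp: h_def hom_dom_def)
    then have "lang (hom_rexp h r) = hom_word h ` map g ` L"
      using that by (simp add: lang_hom_rexp Int_absorb2)
    also have "\<dots> = L" by (simp add: image_image h_map)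
    finally show ?thesis .
  qed
  have "(\<exists>r. lang r = map g ` L \<and> rpn_len r = k) \<longleftrightarrow> (\<exists>r. lang r = L \<and> rpn_len r = k)" for k
  proof
    assume "\<exists>r. lang r = map g ` L \<and> rpn_len r = k"
    then obtain r where "lang r = map g ` L" "rpn_len r = k" by blast
    then show "\<exists>r. lang r = L \<and> rpn_len r = k"
      by (intro exI[of _ "hom_rexp h r"]) (simp add: h_lang)
  next
    assume "\<exists>r. lang r = L \<and> rpn_len r = k"
    then obtain r where "lang r = L" "rpn_len r = k" by blast
    then show "\<exists>r. lang r = map g ` L \<and> rpn_len r = k"
      by (intro exI[of _ "hom_rexp (\<lambda>a. Some (Some (g a))) r"]) (simp add: lang_hom_rexp_rename)
  qed
  then show ?thesis by (simp add: rpn_def)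
qed

section \<open>Positional restriction\<close>

definition positioned :: "('a \<Rightarrow> nat) \<Rightarrow> nat \<Rightarrow> 'a list \<Rightarrow> bool" where
  "positioned pos p w \<longleftrightarrow> map pos w = [p..<p + length w]"

lemma positioned_append:
  "positioned pos p (u @ v) \<longleftrightarrow> positioned pos p u \<and> positioned pos (p + length u) v"
proof -
  have "[p..<p + length u + length v] = [p..<p + length u] @ [p + length u..<p + length u + length v]"
    by (rule upt_add_eq_append) simp
  then have "map pos (u @ v) = [p..<p + length (u @ v)] \<longleftrightarrow>
      map pos u @ map pos v = [p..<p + length u] @ [p + length u..<p + length u + length v]"
    by (simp add: add.assoc)
  then show ?thesis
    unfolding positioned_def by (subst (asm) append_eq_append_conv) auto
qed

lemma positioned_Nil [simp]: "positioned pos p []"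
  by (simp add: positioned_def)

lemma positioned_single [simp]: "positioned pos p [a] \<longleftrightarrow> pos a = p"
  by (simp add: positioned_def)

text \<open>Intended for expressions whose words all have the same length: then the split point of
  every product is known in advance, and a star can only contribute the empty word.\<close>

fun pos_restrict :: "('a \<Rightarrow> nat) \<Rightarrow> nat \<Rightarrow> nat \<Rightarrow> 'a rexp \<Rightarrow> 'a rexp" where
  "pos_restrict pos p q Zero = Zero"
| "pos_restrict pos p q One = (if p = q then One else Zero)"
| "pos_restrict pos p q (Atom a) = (if pos a = p \<and> q = Suc p then Atom a else Zero)"
| "pos_restrict pos p q (Plus r s) = Plus (pos_restrict pos p q r) (pos_restrict pos p q s)"
| "pos_restrict pos p q (Times r s) =
    (let m = p + length (SOME w. w \<in> lang r)
     in Times (pos_restrict pos p m r) (pos_restrict pos m q s))"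
| "pos_restrict pos p q (Star r) = (if p = q then One else Zero)"

lemma rpn_len_pos_restrict_le: "rpn_len (pos_restrict pos p q r) \<le> rpn_len r"
  by (induction r arbitrary: p q) (auto simp: Let_def intro: add_mono)

lemma pos_restrict_sound:
  "w \<in> lang (pos_restrict pos p q r) \<Longrightarrow> w \<in> lang r \<and> positioned pos p w \<and> q = p + length w"
proof (induction r arbitrary: p q w)
  case (Times r s)
  then show ?case by (fastforce simp: Let_def conc_def positioned_append)
qed (auto split: if_splits intro: star.intros)

lemma pos_restrict_complete:
  "\<forall>x\<in>lang r. length x = length w \<Longrightarrow> w \<in> lang r \<Longrightarrow> positioned pos p w
    \<Longrightarrow> w \<in> lang (pos_restrict pos p (p + length w) r)"
proof (induction r arbitrary: p w)
  case (Plus r s p w)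
  have "\<forall>x\<in>lang r. length x = length w" "\<forall>x\<in>lang s. length x = length w"
    using Plus.prems(1) by simp_all
  then show ?case using Plus.IH Plus.prems(2,3) by auto
next
  case (Times r s p w)
  from Times.prems obtain u v where uv: "w = u @ v" "u \<in> lang r" "v \<in> lang s"
    by (auto simp: conc_def)
  have len_r: "\<forall>x\<in>lang r. length x = length u"
  proof
    fix x assume "x \<in> lang r"
    then have "x @ v \<in> lang (Times r s)" using uv by (auto simp: conc_def)
    then show "length x = length u" using Times.prems(1) uv by fastforce
  qed
  have len_s: "\<forall>y\<in>lang s. length y = length v"
  proof
    fix y assume "y \<in> lang s"
    then have "u @ y \<in> lang (Times r s)" using uv by (auto simp: conc_def)
    then show "length y = length v" using Times.prems(1) uv by fastforce
  qed
  have split: "length (SOME x. x \<in> lang r) = length u"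
    using len_r uv(2) by (metis someI)
  have pu: "positioned pos p u" and pv: "positioned pos (p + length u) v"
    using Times.prems(3) uv(1) by (simp_all add: positioned_append)
  have "u \<in> lang (pos_restrict pos p (p + length u) r)"
    by (rule Times.IH(1)[OF len_r uv(2) pu])
  moreover have "v \<in> lang (pos_restrict pos (p + length u) (p + length u + length v) s)"
    by (rule Times.IH(2)[OF len_s uv(3) pv])
  ultimately show ?case using split uv(1) by (auto simp: Let_def conc_def add.assoc)
next
  case (Star r p w)
  have "[] \<in> lang (Star r)" by (simp add: star.star_Nil)
  from bspec[OF Star.prems(1) this] show ?case by simp
qed auto

lemma lang_pos_restrict:
  assumes "\<forall>w\<in>lang r. length w = n"
  shows "lang (pos_restrict pos 0 n r) = {w \<in> lang r. positioned pos 0 w}"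
proof (intro set_eqI iffI)
  fix w assume "w \<in> lang (pos_restrict pos 0 n r)"
  from pos_restrict_sound[OF this] show "w \<in> {w \<in> lang r. positioned pos 0 w}" by simp
next
  fix w assume w: "w \<in> {w \<in> lang r. positioned pos 0 w}"
  then have "w \<in> lang (pos_restrict pos 0 (0 + length w) r)"
    using assms by (intro pos_restrict_complete) auto
  then show "w \<in> lang (pos_restrict pos 0 n r)" using assms w by simp
qed

lemma positioned_unique:
  assumes z: "positioned pos p z" and z': "positioned pos p z'" and eq: "mset z = mset z'"
  shows "z = z'"
proof -
  have "distinct (map pos z)"
    using z by (simp add: positioned_def)
  then have inj: "inj_on pos (set z)"
    by (simp add: distinct_map)
  have "sorted (map pos z)" "sorted (map pos z')"
    using z z' by (simp_all add: positioned_def)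
  then have "sort_key pos z = z'" "sort_key pos z = z"
    using sort_key_inj_key_eq[OF eq inj] sort_key_inj_key_eq[OF refl inj] by simp_all
  then show ?thesis by simp
qed

lemma positioned_shuffles_disjoint:
  assumes "z \<in> shuffles u v" "positioned pos p z"
  shows "pos ` set u \<inter> pos ` set v = {}"
proof -
  have "distinct (map pos z)" using assms(2) by (simp add: positioned_def)
  moreover have "mset (map pos z) = mset (map pos u) + mset (map pos v)"
    using mset_shuffles[OF assms(1)] by simp
  ultimately show ?thesis
    by (metis distinct_append mset_append mset_eq_imp_distinct_iff set_map)
qed

section \<open>The counting bound\<close>

definition sum_mod_words :: "nat \<Rightarrow> nat \<Rightarrow> nat \<Rightarrow> nat list set" where
  "sum_mod_words W l s = {xs. length xs = l \<and> set xs \<subseteq> {..<W} \<and> sum_list xs mod W = s}"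

lemma finite_sum_mod_words: "finite (sum_mod_words W l s)"
  by (rule finite_subset[OF _ finite_lists_length_eq[of "{..<W}" l]]) (auto simp: sum_mod_words_def)

lemma mod_add_right_cancel_nat: "(a + c) mod W = (b + c) mod (W::nat) \<Longrightarrow> a mod W = b mod W"
  by (auto simp: nat_mod_eq_iff)

lemma mod_add_complement: "s < (W::nat) \<Longrightarrow> (a + (s + W - a mod W) mod W) mod W = s"
proof -
  assume "s < W"
  then have "a mod W < W" by simp
  then have "a mod W + (s + W - a mod W) = s + W" by simp
  then have "(a mod W + (s + W - a mod W) mod W) mod W = (s + W) mod W" by (metis mod_add_right_eq)
  with \<open>s < W\<close> show ?thesis by (simp add: mod_add_left_eq)
qed

text \<open>The last letter of a word in \<open>sum_mod_words W (Suc m) s\<close> is determined by the others.\<close>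

lemma card_sum_mod_words:
  assumes "0 < W" "s < W"
  shows "card (sum_mod_words W (Suc m) s) = W ^ m"
proof -
  define complete where "complete ys = ys @ [(s + W - sum_list ys mod W) mod W]" for ys
  define A where "A = {ys. set ys \<subseteq> {..<W} \<and> length ys = m}"
  have "sum_mod_words W (Suc m) s = complete ` A"
  proof (intro subset_antisym subsetI)
    fix xs assume xs: "xs \<in> sum_mod_words W (Suc m) s"
    then have "length xs = Suc m" by (simp add: sum_mod_words_def)
    then obtain ys y where xy: "xs = ys @ [y]" by (auto simp: length_Suc_conv_rev)
    have ys: "ys \<in> A" and y: "y < W" and sum: "(sum_list ys + y) mod W = s"
      using xs xy by (auto simp: sum_mod_words_def A_def)
    have "(y + sum_list ys) mod W = ((s + W - sum_list ys mod W) mod W + sum_list ys) mod W"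
      using sum mod_add_complement[OF assms(2), of "sum_list ys"] by (simp add: add.commute)
    then have "y mod W = (s + W - sum_list ys mod W) mod W mod W"
      by (rule mod_add_right_cancel_nat)
    then have "y = (s + W - sum_list ys mod W) mod W" using y by simp
    then show "xs \<in> complete ` A" using xy ys by (auto simp: complete_def)
  next
    fix xs assume "xs \<in> complete ` A"
    then show "xs \<in> sum_mod_words W (Suc m) s"
      using assms mod_add_complement by (auto simp: complete_def A_def sum_mod_words_def)
  qed
  moreover have "inj_on complete A" by (auto simp: inj_on_def complete_def)
  ultimately have "card (sum_mod_words W (Suc m) s) = card A" by (simp add: card_image)
  also have "card A = W ^ m" using card_lists_length_eq[of "{..<W}" m] by (simp add: A_def)
  finally show ?thesis .
qed

lemma conc_subset_sum_mod_words:
  assumes "conc A B \<subseteq> sum_mod_words W l s" "u \<in> A" "v \<in> B"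
  shows "A \<subseteq> sum_mod_words W (length u) (sum_list u mod W)"
    and "B \<subseteq> sum_mod_words W (length v) (sum_list v mod W)"
proof -
  have in_words: "x @ y \<in> sum_mod_words W l s" if "x \<in> A" "y \<in> B" for x y
    using assms(1) that by (auto simp: conc_def)
  show "A \<subseteq> sum_mod_words W (length u) (sum_list u mod W)"
  proof
    fix x assume "x \<in> A"
    with in_words[OF _ assms(3)] in_words[OF assms(2,3)]
    have "length x = length u" "set x \<subseteq> {..<W}"
      and "(sum_list x + sum_list v) mod W = (sum_list u + sum_list v) mod W"
      by (auto simp: sum_mod_words_def)
    then show "x \<in> sum_mod_words W (length u) (sum_list u mod W)"
      by (auto simp: sum_mod_words_def dest: mod_add_right_cancel_nat)
  qed
  show "B \<subseteq> sum_mod_words W (length v) (sum_list v mod W)"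
  proof
    fix y assume "y \<in> B"
    with in_words[OF assms(2)] in_words[OF assms(2,3)]
    have "length y = length v" "set y \<subseteq> {..<W}"
      and "(sum_list u + sum_list y) mod W = (sum_list u + sum_list v) mod W"
      by (auto simp: sum_mod_words_def)
    moreover from this(3) have "sum_list y mod W = sum_list v mod W"
      by (metis add.commute mod_add_right_cancel_nat)
    ultimately show "y \<in> sum_mod_words W (length v) (sum_list v mod W)"
      by (simp add: sum_mod_words_def)
  qed
qed

lemma floor_log_add_le: "floor_log (a + b) \<le> Suc (floor_log (max a b))"
proof (cases "max a b = 0")
  case False
  have "floor_log (a + b) \<le> floor_log (2 * max a b)" by (rule floor_log_le_iff) simp
  with False show ?thesis by simp
qed simp

lemma product_count_bound:
  fixes W :: nat
  assumes a: "a * W ^ floor_log l1 \<le> k * W ^ (l1 - 1)" and b: "b \<le> W ^ (l2 - 1)"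
    and l: "floor_log (l1 + l2) \<le> Suc (floor_log l1)" and pos: "0 < l1" "0 < l2" "0 < W"
  shows "a * b * W ^ floor_log (l1 + l2) \<le> k * W ^ (l1 + l2 - 1)"
proof -
  have "a * b * W ^ floor_log (l1 + l2) \<le> a * b * W ^ Suc (floor_log l1)"
    using l pos by (intro mult_le_mono2 power_increasing) auto
  also have "\<dots> = (a * W ^ floor_log l1) * b * W" by (simp add: algebra_simps)
  also have "\<dots> \<le> (k * W ^ (l1 - 1)) * W ^ (l2 - 1) * W"
    using mult_le_mono[OF a b] by (rule mult_le_mono1)
  also have "\<dots> = k * W ^ (l1 + l2 - 1)"
    using pos by (cases l1; cases l2) (auto simp: power_add algebra_simps)
  finally show ?thesis .
qed

lemma card_product_sum_mod_words_le:
  assumes "0 < W" "0 < l1" "0 < l2" "s1 < W" "s2 < W"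
    and A: "A \<subseteq> sum_mod_words W l1 s1" and B: "B \<subseteq> sum_mod_words W l2 s2"
    and IH_A: "card A * W ^ floor_log l1 \<le> a * W ^ (l1 - 1)"
    and IH_B: "card B * W ^ floor_log l2 \<le> b * W ^ (l2 - 1)"
  shows "card A * card B * W ^ floor_log (l1 + l2) \<le> max a b * W ^ (l1 + l2 - 1)"
proof -
  have card_A: "card A \<le> W ^ (l1 - 1)"
    using card_mono[OF finite_sum_mod_words A] card_sum_mod_words[OF assms(1,4), of "l1 - 1"] assms(2)
    by simp
  have card_B: "card B \<le> W ^ (l2 - 1)"
    using card_mono[OF finite_sum_mod_words B] card_sum_mod_words[OF assms(1,5), of "l2 - 1"] assms(3)
    by simp
  show ?thesis
  proof (cases "l2 \<le> l1")
    case True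
    then have "floor_log (l1 + l2) \<le> Suc (floor_log l1)"
      using floor_log_add_le[of l1 l2] by (simp add: max_def)
    then have "card A * card B * W ^ floor_log (l1 + l2) \<le> a * W ^ (l1 + l2 - 1)"
      using product_count_bound[OF IH_A card_B] assms by simp
    also have "\<dots> \<le> max a b * W ^ (l1 + l2 - 1)" by (intro mult_le_mono1) simp
    finally show ?thesis .
  next
    case False
    then have "floor_log (l2 + l1) \<le> Suc (floor_log l2)"
      using floor_log_add_le[of l1 l2] by (simp add: max_def add.commute)
    then have "card B * card A * W ^ floor_log (l2 + l1) \<le> b * W ^ (l2 + l1 - 1)"
      using product_count_bound[OF IH_B card_A] assms by simp
    then have "card A * card B * W ^ floor_log (l1 + l2) \<le> b * W ^ (l1 + l2 - 1)"
      by (simp add: ac_simps)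
    also have "\<dots> \<le> max a b * W ^ (l1 + l2 - 1)" by (intro mult_le_mono1) simp
    finally show ?thesis .
  qed
qed

lemma card_conc_sum_mod_words_le:
  assumes "0 < W" "0 < l" and AB: "conc A B \<subseteq> sum_mod_words W l s"
    and IH_A: "\<And>l s. 0 < l \<Longrightarrow> A \<subseteq> sum_mod_words W l s \<Longrightarrow> card A * W ^ floor_log l \<le> a * W ^ (l - 1)"
    and IH_B: "\<And>l s. 0 < l \<Longrightarrow> B \<subseteq> sum_mod_words W l s \<Longrightarrow> card B * W ^ floor_log l \<le> b * W ^ (l - 1)"
  shows "card (conc A B) * W ^ floor_log l \<le> max a b * W ^ (l - 1)"
proof (cases "A = {} \<or> B = {}")
  case False
  then obtain u v where uv: "u \<in> A" "v \<in> B" by blast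
  have A: "A \<subseteq> sum_mod_words W (length u) (sum_list u mod W)"
    and B: "B \<subseteq> sum_mod_words W (length v) (sum_list v mod W)"
    using conc_subset_sum_mod_words[OF AB uv] by simp_all
  have "u @ v \<in> conc A B" using uv by (auto simp: conc_def)
  then have l: "l = length u + length v" using AB by (auto simp: sum_mod_words_def)
  consider "u = []" | "v = []" | "u \<noteq> []" "v \<noteq> []" by blast
  then show ?thesis
  proof cases
    case 1
    then have "A = {[]}" using A uv(1) by (auto simp: sum_mod_words_def)
    then have "card (conc A B) * W ^ floor_log l \<le> b * W ^ (l - 1)"
      using IH_B[OF assms(2)] AB by (simp add: conc_def)
    also have "\<dots> \<le> max a b * W ^ (l - 1)" by (intro mult_le_mono1) simp
    finally show ?thesis .
  next
    case 2
    then have "B = {[]}" using B uv(2) by (auto simp: sum_mod_words_def)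
    then have "card (conc A B) * W ^ floor_log l \<le> a * W ^ (l - 1)"
      using IH_A[OF assms(2)] AB by (simp add: conc_def)
    also have "\<dots> \<le> max a b * W ^ (l - 1)" by (intro mult_le_mono1) simp
    finally show ?thesis .
  next
    case 3
    have "card (conc A B) \<le> card A * card B"
      using A B finite_sum_mod_words by (simp add: card_conc_le finite_subset)
    moreover have "card A * W ^ floor_log (length u) \<le> a * W ^ (length u - 1)"
      "card B * W ^ floor_log (length v) \<le> b * W ^ (length v - 1)"
      using IH_A[OF _ A] IH_B[OF _ B] 3 by simp_all
    then have "card A * card B * W ^ floor_log l \<le> max a b * W ^ (l - 1)"
      unfolding l using card_product_sum_mod_words_le[OF assms(1) _ _ _ _ A B] 3 assms(1) by simp
    ultimately show ?thesis by (meson le_trans mult_le_mono1)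
  qed
qed auto

lemma card_lang_sum_mod_words_le:
  assumes "0 < W"
  shows "0 < l \<Longrightarrow> lang r \<subseteq> sum_mod_words W l s
    \<Longrightarrow> card (lang r) * W ^ floor_log l \<le> rpn_len r * W ^ (l - 1)"
proof (induction r arbitrary: l s)
  case One then show ?case by (auto simp: sum_mod_words_def)
next
  case (Atom a)
  then have "l = 1" by (auto simp: sum_mod_words_def)
  then show ?case by simp
next
  case (Star r)
  have "[] \<in> lang (Star r)" by (simp add: star.star_Nil)
  then show ?case using Star.prems by (auto simp: sum_mod_words_def)
next
  case (Plus r1 r2)
  have "card (lang (Plus r1 r2)) * W ^ floor_log l
      \<le> (card (lang r1) + card (lang r2)) * W ^ floor_log l"
    by (simp add: card_Un_le)
  also have "\<dots> \<le> rpn_len r1 * W ^ (l - 1) + rpn_len r2 * W ^ (l - 1)"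
    using Plus.IH[of l s] Plus.prems by (simp add: add_mult_distrib add_mono)
  also have "\<dots> \<le> rpn_len (Plus r1 r2) * W ^ (l - 1)" by (simp add: add_mult_distrib)
  finally show ?case .
next
  case (Times r1 r2)
  have "card (lang (Times r1 r2)) * W ^ floor_log l \<le> max (rpn_len r1) (rpn_len r2) * W ^ (l - 1)"
    using card_conc_sum_mod_words_le[OF assms Times.prems(1) _ Times.IH] Times.prems(2) by simp
  also have "\<dots> \<le> rpn_len (Times r1 r2) * W ^ (l - 1)" by (intro mult_le_mono1) simp
  finally show ?case .
qed simp

lemma rpn_len_ge_if_lang_sum_mod_words:
  assumes "0 < W" "0 < l" "s < W" "lang r = sum_mod_words W l s"
  shows "W ^ floor_log l \<le> rpn_len r"
proof -
  have "W ^ floor_log l * W ^ (l - 1) = card (lang r) * W ^ floor_log l"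
    using card_sum_mod_words[OF assms(1,3), of "l - 1"] assms(2,4) by simp
  also have "\<dots> \<le> rpn_len r * W ^ (l - 1)"
    by (rule card_lang_sum_mod_words_le[OF assms(1,2), of r s]) (simp add: assms(4))
  finally show ?thesis using assms(1) by simp
qed

section \<open>Blocks\<close>

text \<open>\<open>Pad\<close> and \<open>Mark\<close> spell the languages of parts (a) and (c). \<open>XSym p d\<close> and \<open>YSym p d\<close>
  are the letters of the two shuffled languages of part (b): \<open>p\<close> is the position the letter should
  take in an aligned interleaving, \<open>d\<close> an optional datum.\<close>

datatype sym = Pad | Mark nat | XSym nat "nat option" | YSym nat "nat option"

instance sym :: countable
  by countable_datatype

definition block :: "nat \<Rightarrow> sym list" where
  "block j = Mark j # replicate j Pad"

definition blocks_rexp :: "nat \<Rightarrow> sym rexp" where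
  "blocks_rexp W = words_rexp (map block [0..<W])"

definition padded_blocks :: "nat \<Rightarrow> nat \<Rightarrow> nat \<Rightarrow> sym list set" where
  "padded_blocks W l N = {concat (map block js) @ replicate (t * W) Pad | js t.
     length js = l \<and> set js \<subseteq> {..<W} \<and> l + sum_list js + t * W = N}"

lemma length_concat_block [simp]: "length (concat (map block js)) = length js + sum_list js"
  by (induction js) (auto simp: block_def)

lemma lang_blocks_rexp_power:
  "lang (prod_rexp (replicate l (blocks_rexp W))) =
    {concat (map block js) | js. length js = l \<and> set js \<subseteq> {..<W}}"
proof -
  have "{concat ws | ws. length ws = l \<and> ws \<in> lists (block ` {..<W})} =
      {concat (map block js) | js. length js = l \<and> js \<in> lists {..<W}}"
    by (auto simp: lists_image)
  then show ?thesis
    by (simp add: lang_prod_rexp_replicate blocks_rexp_def lists_eq_set atLeast0LessThan)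
qed

definition block_value :: "sym \<Rightarrow> nat option option" where
  "block_value a = (case a of Pad \<Rightarrow> Some None | Mark j \<Rightarrow> Some (Some j) | _ \<Rightarrow> None)"

lemma hom_letter_block_value [simp]:
  "hom_letter block_value Pad = []" "hom_letter block_value (Mark j) = [j]"
  by (simp_all add: hom_letter_def block_value_def)

lemma hom_word_block_value_Pad [simp]: "hom_word block_value (replicate n Pad) = []"
  by (induction n) simp_all

lemma hom_word_block_value_blocks [simp]: "hom_word block_value (concat (map block js)) = js"
  by (induction js) (simp_all add: block_def)

lemma padded_blocks_in_hom_dom: "padded_blocks W l N \<subseteq> lists (hom_dom block_value)"
  by (auto simp: padded_blocks_def block_def hom_dom_def block_value_def)

text \<open>Erasing the padding leaves the block lengths, whose sum is fixed modulo \<open>W\<close> by the total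
  length \<open>N\<close>; conversely, when \<open>l * W \<le> N\<close> every such sequence can be padded up to \<open>N\<close>.\<close>

lemma hom_padded_blocks:
  assumes "0 < W" "l * W \<le> N"
  shows "hom_word block_value ` padded_blocks W l N = sum_mod_words W l ((N - l) mod W)"
proof (intro subset_antisym subsetI)
  fix x assume "x \<in> hom_word block_value ` padded_blocks W l N"
  then show "x \<in> sum_mod_words W l ((N - l) mod W)"
    by (auto simp: padded_blocks_def sum_mod_words_def)
next
  fix js assume "js \<in> sum_mod_words W l ((N - l) mod W)"
  then have js: "length js = l" "set js \<subseteq> {..<W}" "sum_list js mod W = (N - l) mod W"
    by (auto simp: sum_mod_words_def)
  have "sum_list js \<le> l * (W - 1)"
    using sum_list_le_length_mult[of js "W - 1"] js(1,2) by fastforce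
  moreover have "l + l * (W - 1) = l * W" using assms(1) by (cases W) auto
  ultimately have le: "l + sum_list js \<le> N" using assms(2) by linarith
  then have "W dvd (N - l) - sum_list js"
    using js(3) by (subst mod_eq_dvd_iff_nat[symmetric]) auto
  then obtain t where t: "N - l - sum_list js = t * W" by (metis dvdE mult.commute)
  have "concat (map block js) @ replicate (t * W) Pad \<in> padded_blocks W l N"
    using js le t by (force simp: padded_blocks_def)
  then show "js \<in> hom_word block_value ` padded_blocks W l N"
    by (intro image_eqI[of _ _ "concat (map block js) @ replicate (t * W) Pad"]) simp_all
qed

lemma rpn_len_ge_if_lang_padded_blocks:
  assumes "0 < W" "0 < l" "l * W \<le> N" "lang r = padded_blocks W l N"
  shows "W ^ floor_log l \<le> rpn_len r"
proof -
  have "lang (hom_rexp block_value r) = sum_mod_words W l ((N - l) mod W)"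
    using hom_padded_blocks[OF assms(1,3)] padded_blocks_in_hom_dom assms(4)
    by (simp add: lang_hom_rexp Int_absorb2)
  from rpn_len_ge_if_lang_sum_mod_words[OF assms(1,2) _ this] assms(1) show ?thesis by simp
qed

definition pads_star_rexp :: "nat \<Rightarrow> nat \<Rightarrow> sym rexp" where
  "pads_star_rexp W l =
    Times (prod_rexp (replicate l (blocks_rexp W))) (Star (word_rexp (replicate W Pad)))"

lemma lang_pads_star_rexp:
  "lang (pads_star_rexp W l) = {concat (map block js) @ replicate (t * W) Pad | js t.
     length js = l \<and> set js \<subseteq> {..<W}}"
  by (simp add: pads_star_rexp_def lang_blocks_rexp_power star_singleton concat_replicate_replicate
      conc_def) blast

lemma length_slice_pads_star_rexp:
  "{w \<in> lang (pads_star_rexp W l). length w = N} = padded_blocks W l N"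
proof (intro set_eqI iffI)
  fix w assume "w \<in> {w \<in> lang (pads_star_rexp W l). length w = N}"
  then obtain js t where "w = concat (map block js) @ replicate (t * W) Pad"
    "length js = l" "set js \<subseteq> {..<W}" "length w = N"
    by (auto simp: lang_pads_star_rexp)
  then show "w \<in> padded_blocks W l N" unfolding padded_blocks_def by auto
next
  fix w assume "w \<in> padded_blocks W l N"
  then obtain js t where "w = concat (map block js) @ replicate (t * W) Pad"
    "length js = l" "set js \<subseteq> {..<W}" "l + sum_list js + t * W = N"
    by (auto simp: padded_blocks_def)
  then show "w \<in> {w \<in> lang (pads_star_rexp W l). length w = N}"
    unfolding lang_pads_star_rexp by auto
qed

definition pads_rexp :: "nat \<Rightarrow> nat \<Rightarrow> sym rexp" where
  "pads_rexp W T = words_rexp (map (\<lambda>t. replicate (t * W) Pad) [0..<Suc T])"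

lemma lang_pads_rexp: "lang (pads_rexp W T) = (\<lambda>t. replicate (t * W) Pad) ` {..T}"
  by (simp only: pads_rexp_def lang_words_rexp set_map set_upt atLeastLessThanSuc_atLeastAtMost
      atLeast0AtMost)

definition blocks_pads_rexp :: "nat \<Rightarrow> nat \<Rightarrow> nat \<Rightarrow> sym rexp" where
  "blocks_pads_rexp W l T = Times (prod_rexp (replicate l (blocks_rexp W))) (pads_rexp W T)"

lemma lang_blocks_pads_rexp:
  "lang (blocks_pads_rexp W l T) = {concat (map block js) @ replicate (t * W) Pad | js t.
     length js = l \<and> set js \<subseteq> {..<W} \<and> t \<le> T}"
  by (simp add: blocks_pads_rexp_def lang_pads_rexp lang_blocks_rexp_power conc_def) blast

definition block_letters_rexp :: "nat \<Rightarrow> nat \<Rightarrow> sym rexp" where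
  "block_letters_rexp W N =
    prod_rexp (replicate N (words_rexp (map (\<lambda>a. [a]) (Pad # map Mark [0..<W]))))"

lemma lang_block_letters_rexp:
  "lang (block_letters_rexp W N) = {w. length w = N \<and> set w \<subseteq> insert Pad (Mark ` {..<W})}"
proof -
  let ?A = "insert Pad (Mark ` {..<W})"
  have "lang (block_letters_rexp W N) = {concat ws | ws. length ws = N \<and> set ws \<subseteq> (\<lambda>a. [a]) ` ?A}"
    by (simp add: block_letters_rexp_def lang_prod_rexp_replicate image_image atLeast0LessThan)
  also have "\<dots> = {concat ws | ws. length ws = N \<and> ws \<in> map (\<lambda>a. [a]) ` lists ?A}"
    unfolding lists_image[symmetric] by (simp add: lists_eq_set)
  also have "\<dots> = {w. length w = N \<and> w \<in> lists ?A}"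
  proof (intro set_eqI iffI)
    fix w assume "w \<in> {w. length w = N \<and> w \<in> lists ?A}"
    then show "w \<in> {concat ws | ws. length ws = N \<and> ws \<in> map (\<lambda>a. [a]) ` lists ?A}"
      by (intro CollectI exI[of _ "map (\<lambda>a. [a]) w"]) auto
  qed auto
  finally show ?thesis by (simp add: lists_eq_set)
qed

lemma blocks_pads_Int_block_letters:
  assumes "0 < W" "N \<le> T * W"
  shows "lang (blocks_pads_rexp W l T) \<inter> lang (block_letters_rexp W N) = padded_blocks W l N"
proof (intro subset_antisym subsetI)
  fix w assume "w \<in> lang (blocks_pads_rexp W l T) \<inter> lang (block_letters_rexp W N)"
  then obtain js t where "w = concat (map block js) @ replicate (t * W) Pad"
    "length js = l" "set js \<subseteq> {..<W}" "length w = N"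
    by (auto simp: lang_blocks_pads_rexp lang_block_letters_rexp)
  then show "w \<in> padded_blocks W l N" unfolding padded_blocks_def by auto
next
  fix w assume "w \<in> padded_blocks W l N"
  then obtain js t where w: "w = concat (map block js) @ replicate (t * W) Pad"
    "length js = l" "set js \<subseteq> {..<W}" "l + sum_list js + t * W = N"
    by (auto simp: padded_blocks_def)
  then have "t * W \<le> T * W" using assms by linarith
  then have "t \<le> T" using assms(1) by simp
  moreover have "set (concat (map block js)) \<subseteq> insert Pad (Mark ` {..<W})"
    using w(3) by (auto simp: block_def)
  ultimately show "w \<in> lang (blocks_pads_rexp W l T) \<inter> lang (block_letters_rexp W N)"
    using w unfolding lang_blocks_pads_rexp lang_block_letters_rexp by auto
qed

section \<open>Windows\<close>

text \<open>Choices made separately for the blocks combine into a single choice function \<open>q\<close>, because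
  a window only looks at \<open>q\<close> at its own index and, if it is the second window of a block, at
  the preceding one.\<close>

lemma lang_prod_rexp_windows:
  assumes "0 < W"
    and blocks: "\<And>i. lang (B i) = {win q (2 * i + c) @ win q (2 * i + c + 1) | q. \<forall>k. q k < W}"
    and local: "\<And>q q' k. c \<le> k \<Longrightarrow> q k = q' k \<Longrightarrow> (odd (k - c) \<Longrightarrow> q (k - 1) = q' (k - 1))
      \<Longrightarrow> win q k = win q' k"
  shows "lang (prod_rexp (map B [0..<m])) = {concat (map (win q) [c..<2 * m + c]) | q. \<forall>k. q k < W}"
proof (intro set_eqI iffI)
  fix w assume "w \<in> lang (prod_rexp (map B [0..<m]))"
  then obtain ws where w: "w = concat (map ws [0..<m])" and "\<forall>i<m. ws i \<in> lang (B i)"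
    by (auto simp: lang_prod_rexp_upt)
  then have "\<forall>i<m. \<exists>q. (\<forall>k. q k < W) \<and> ws i = win q (2 * i + c) @ win q (2 * i + c + 1)"
    by (auto simp: blocks)
  then obtain Q where Q: "\<And>i. i < m \<Longrightarrow>
      (\<forall>k. Q i k < W) \<and> ws i = win (Q i) (2 * i + c) @ win (Q i) (2 * i + c + 1)"
    by metis
  define q where "q k = (if (k - c) div 2 < m then Q ((k - c) div 2) k else 0)" for k
  have "ws i = win q (2 * i + c) @ win q (2 * i + c + 1)" if "i < m" for i
  proof -
    have "win q (2 * i + c) = win (Q i) (2 * i + c)" "win q (2 * i + c + 1) = win (Q i) (2 * i + c + 1)"
      using that by (auto intro!: local simp: q_def)
    with Q[OF that] show ?thesis by simp
  qed
  then have ws: "map ws [0..<m] = map (\<lambda>i. win q (2 * i + c) @ win q (2 * i + c + 1)) [0..<m]"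
    by (intro map_cong) auto
  have "w = concat (map (win q) [c..<2 * m + c])"
    unfolding w ws concat_map_pairs[symmetric] by (rule refl)
  moreover have "\<forall>k. q k < W" using Q assms(1) by (simp add: q_def)
  ultimately show "w \<in> {concat (map (win q) [c..<2 * m + c]) | q. \<forall>k. q k < W}" by blast
next
  fix w assume "w \<in> {concat (map (win q) [c..<2 * m + c]) | q. \<forall>k. q k < W}"
  then obtain q where w: "w = concat (map (win q) [c..<2 * m + c])" and q: "\<forall>k. q k < W"
    by blast
  have "\<forall>i<m. win q (2 * i + c) @ win q (2 * i + c + 1) \<in> lang (B i)"
    using q by (auto simp: blocks)
  then show "w \<in> lang (prod_rexp (map B [0..<m]))"
    unfolding w concat_map_pairs[symmetric] lang_prod_rexp_upt by blast
qed

definition pair_choices :: "nat \<Rightarrow> nat \<Rightarrow> (nat \<Rightarrow> nat) list" where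
  "pair_choices W k = [(\<lambda>_. b)(k := a). a \<leftarrow> [0..<W], b \<leftarrow> [0..<W]]"

definition pair_block_rexp :: "nat \<Rightarrow> ((nat \<Rightarrow> nat) \<Rightarrow> nat \<Rightarrow> 'a list) \<Rightarrow> nat \<Rightarrow> 'a rexp" where
  "pair_block_rexp W win k = words_rexp (map (\<lambda>q. win q k @ win q (Suc k)) (pair_choices W k))"

lemma image_pair_choices:
  assumes "\<And>q q'. q k = q' k \<Longrightarrow> q (Suc k) = q' (Suc k) \<Longrightarrow> g q = g q'"
  shows "g ` set (pair_choices W k) = {g q | q. \<forall>j. q j < W}"
proof (intro subset_antisym subsetI)
  fix w assume "w \<in> g ` set (pair_choices W k)"
  then show "w \<in> {g q | q. \<forall>j. q j < W}" by (auto simp: pair_choices_def)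
next
  fix w assume "w \<in> {g q | q. \<forall>j. q j < W}"
  then obtain q where "w = g q" "\<forall>j. q j < W" by blast
  moreover have "g q = g ((\<lambda>_. q (Suc k))(k := q k))" by (rule assms) simp_all
  ultimately show "w \<in> g ` set (pair_choices W k)" by (force simp: pair_choices_def)
qed

lemma length_pair_choices: "length (pair_choices W k) = W * W"
  by (simp add: pair_choices_def length_concat sum_list_triv comp_def)

lemma lang_prod_pair_block_rexp:
  assumes "0 < W"
    and local: "\<And>q q' k. c \<le> k \<Longrightarrow> q k = q' k \<Longrightarrow> (odd (k - c) \<Longrightarrow> q (k - 1) = q' (k - 1))
      \<Longrightarrow> win q k = win q' k"
  shows "lang (prod_rexp (map (\<lambda>i. pair_block_rexp W win (2 * i + c)) [0..<m])) =
    {concat (map (win q) [c..<2 * m + c]) | q. \<forall>k. q k < W}"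
proof (rule lang_prod_rexp_windows[OF assms(1) _ local])
  fix i
  have "(\<lambda>q. win q (2 * i + c) @ win q (Suc (2 * i + c))) ` set (pair_choices W (2 * i + c)) =
      {win q (2 * i + c) @ win q (Suc (2 * i + c)) | q. \<forall>j. q j < W}"
  proof (rule image_pair_choices)
    fix q q' :: "nat \<Rightarrow> nat"
    assume "q (2 * i + c) = q' (2 * i + c)" "q (Suc (2 * i + c)) = q' (Suc (2 * i + c))"
    then have "win q (2 * i + c) = win q' (2 * i + c)"
      and "win q (Suc (2 * i + c)) = win q' (Suc (2 * i + c))"
      by (auto intro!: local)
    then show "win q (2 * i + c) @ win q (Suc (2 * i + c)) =
        win q' (2 * i + c) @ win q' (Suc (2 * i + c))"
      by simp
  qed
  then show "lang (pair_block_rexp W win (2 * i + c)) =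
      {win q (2 * i + c) @ win q (2 * i + c + 1) | q. \<forall>k. q k < W}"
    by (simp add: pair_block_rexp_def)
qed

text \<open>Window \<open>k\<close> consists of the positions \<open>k * Suc W + j\<close> for \<open>j \<le> W\<close>. A word of the first language
  leaves slot \<open>q k\<close> of the window free and writes a datum into slot \<open>W\<close>; a word of the second
  language has a single letter per window, in slot \<open>q k\<close>. An interleaving can list the positions
  in order only if both words use the same \<open>q\<close>, and then the data are the successive differences
  of \<open>q\<close> modulo \<open>W\<close>, recorded by the first word at odd and by the second at even windows.\<close>

fun sym_pos :: "sym \<Rightarrow> nat" where
  "sym_pos (XSym p d) = p"
| "sym_pos (YSym p d) = p"
| "sym_pos _ = 0"

definition gap_diff :: "nat \<Rightarrow> (nat \<Rightarrow> nat) \<Rightarrow> nat \<Rightarrow> nat" where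
  "gap_diff W q k = (q k + W - q (k - 1)) mod W"

definition xdatum :: "nat \<Rightarrow> (nat \<Rightarrow> nat) \<Rightarrow> nat \<Rightarrow> nat option" where
  "xdatum W q k = (if odd k then Some (gap_diff W q k) else None)"

definition ydatum :: "nat \<Rightarrow> (nat \<Rightarrow> nat) \<Rightarrow> nat \<Rightarrow> nat option" where
  "ydatum W q k = (if even k \<and> k \<noteq> 0 then Some (gap_diff W q k) else None)"

definition xblank :: "nat \<Rightarrow> nat \<Rightarrow> nat list \<Rightarrow> sym list" where
  "xblank W k js = map (\<lambda>j. XSym (k * Suc W + j) None) js"

definition xwin :: "nat \<Rightarrow> (nat \<Rightarrow> nat) \<Rightarrow> nat \<Rightarrow> sym list" where
  "xwin W q k =
    xblank W k [0..<q k] @ xblank W k [Suc (q k)..<W] @ [XSym (k * Suc W + W) (xdatum W q k)]"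

definition ysym :: "nat \<Rightarrow> (nat \<Rightarrow> nat) \<Rightarrow> nat \<Rightarrow> sym" where
  "ysym W q k = YSym (k * Suc W + q k) (ydatum W q k)"

definition zwin :: "nat \<Rightarrow> (nat \<Rightarrow> nat) \<Rightarrow> nat \<Rightarrow> sym list" where
  "zwin W q k =
    xblank W k [0..<q k] @ ysym W q k #
    xblank W k [Suc (q k)..<W] @ [XSym (k * Suc W + W) (xdatum W q k)]"

definition xword :: "nat \<Rightarrow> (nat \<Rightarrow> nat) \<Rightarrow> nat \<Rightarrow> sym list" where
  "xword W q K = concat (map (xwin W q) [0..<K])"

definition yword :: "nat \<Rightarrow> (nat \<Rightarrow> nat) \<Rightarrow> nat \<Rightarrow> sym list" where
  "yword W q K = map (ysym W q) [0..<K]"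

definition zword :: "nat \<Rightarrow> (nat \<Rightarrow> nat) \<Rightarrow> nat \<Rightarrow> sym list" where
  "zword W q K = concat (map (zwin W q) [0..<K])"

lemma xwin_cong: "q k = q' k \<Longrightarrow> (odd k \<Longrightarrow> q (k - 1) = q' (k - 1)) \<Longrightarrow> xwin W q k = xwin W q' k"
  by (simp add: xwin_def xdatum_def gap_diff_def)

lemma ysym_cong:
  "q k = q' k \<Longrightarrow> (even k \<Longrightarrow> k \<noteq> 0 \<Longrightarrow> q (k - 1) = q' (k - 1)) \<Longrightarrow> ysym W q k = ysym W q' k"
  by (simp add: ysym_def ydatum_def gap_diff_def)

definition xblocks_rexp :: "nat \<Rightarrow> nat \<Rightarrow> sym rexp" where
  "xblocks_rexp W m = prod_rexp (map (\<lambda>i. pair_block_rexp W (xwin W) (2 * i)) [0..<m])"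

definition yblocks_rexp :: "nat \<Rightarrow> nat \<Rightarrow> sym rexp" where
  "yblocks_rexp W m =
    prod_rexp (map (\<lambda>i. pair_block_rexp W (\<lambda>q k. [ysym W q k]) (2 * i + 1)) [0..<m])"

definition xwords_rexp :: "nat \<Rightarrow> nat \<Rightarrow> sym rexp" where
  "xwords_rexp W m = Times (xblocks_rexp W m) (word_rexp (xwin W (\<lambda>_. 0) (2 * m)))"

definition ywords_rexp :: "nat \<Rightarrow> nat \<Rightarrow> sym rexp" where
  "ywords_rexp W m = Times (Atom (ysym W (\<lambda>_. 0) 0)) (yblocks_rexp W m)"

lemma lang_xblocks_rexp:
  assumes "0 < W"
  shows "lang (xblocks_rexp W m) = {concat (map (xwin W q) [0..<2 * m]) | q. \<forall>k. q k < W}"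
proof -
  have "lang (prod_rexp (map (\<lambda>i. pair_block_rexp W (xwin W) (2 * i + 0)) [0..<m])) =
      {concat (map (xwin W q) [0..<2 * m + 0]) | q. \<forall>k. q k < W}"
    by (rule lang_prod_pair_block_rexp[OF assms]) (auto intro!: xwin_cong)
  then show ?thesis by (simp add: xblocks_rexp_def)
qed

lemma lang_yblocks_rexp:
  assumes "0 < W"
  shows "lang (yblocks_rexp W m) = {map (ysym W q) [1..<Suc (2 * m)] | q. \<forall>k. q k < W}"
proof -
  have "lang (yblocks_rexp W m) = {concat (map (\<lambda>k. [ysym W q k]) [1..<2 * m + 1]) | q. \<forall>k. q k < W}"
    unfolding yblocks_rexp_def
    by (rule lang_prod_pair_block_rexp[OF assms]) (auto intro!: ysym_cong)
  then show ?thesis by simp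
qed

lemma lang_xwords_rexp:
  assumes "0 < W"
  shows "lang (xwords_rexp W m) = {xword W q (Suc (2 * m)) | q. (\<forall>k. q k < W) \<and> q (2 * m) = 0}"
proof -
  have split: "xword W q (Suc (2 * m)) = concat (map (xwin W q) [0..<2 * m]) @ xwin W q (2 * m)"
    for q by (simp add: xword_def)
  have last: "xwin W q (2 * m) = xwin W (\<lambda>_. 0) (2 * m)" if "q (2 * m) = 0" for q
    using that by (intro xwin_cong) auto
  show ?thesis
  proof (intro set_eqI iffI)
    fix w assume "w \<in> lang (xwords_rexp W m)"
    then obtain q where w: "w = concat (map (xwin W q) [0..<2 * m]) @ xwin W (\<lambda>_. 0) (2 * m)"
      and q: "\<forall>k. q k < W"
      by (auto simp: xwords_rexp_def conc_def lang_xblocks_rexp[OF assms])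
    define q' where "q' = q(2 * m := 0)"
    have init: "map (xwin W q') [0..<2 * m] = map (xwin W q) [0..<2 * m]"
      by (rule map_cong[OF refl], rule xwin_cong) (auto simp: q'_def)
    have "xwin W q' (2 * m) = xwin W (\<lambda>_. 0) (2 * m)"
      by (rule last) (simp add: q'_def)
    then have "w = xword W q' (Suc (2 * m))"
      unfolding split w init by simp
    moreover have "\<forall>k. q' k < W" "q' (2 * m) = 0" using q assms by (simp_all add: q'_def)
    ultimately show "w \<in> {xword W q (Suc (2 * m)) | q. (\<forall>k. q k < W) \<and> q (2 * m) = 0}" by blast
  next
    fix w assume "w \<in> {xword W q (Suc (2 * m)) | q. (\<forall>k. q k < W) \<and> q (2 * m) = 0}"
    then obtain q where w: "w = xword W q (Suc (2 * m))" and q: "\<forall>k. q k < W" "q (2 * m) = 0"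
      by blast
    have "concat (map (xwin W q) [0..<2 * m]) \<in> lang (xblocks_rexp W m)"
      unfolding lang_xblocks_rexp[OF assms] using q(1) by blast
    then show "w \<in> lang (xwords_rexp W m)"
      unfolding w split last[of q, OF q(2)] by (auto simp: xwords_rexp_def conc_def)
  qed
qed

lemma lang_ywords_rexp:
  assumes "0 < W"
  shows "lang (ywords_rexp W m) = {yword W q (Suc (2 * m)) | q. (\<forall>k. q k < W) \<and> q 0 = 0}"
proof -
  have split: "yword W q (Suc (2 * m)) = ysym W q 0 # map (ysym W q) [1..<Suc (2 * m)]" for q
    by (simp add: yword_def upt_conv_Cons del: upt_Suc)
  have first: "ysym W q 0 = ysym W (\<lambda>_. 0) 0" if "q 0 = 0" for q
    using that by (intro ysym_cong) auto
  show ?thesis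
  proof (intro set_eqI iffI)
    fix w assume "w \<in> lang (ywords_rexp W m)"
    then obtain v where w: "w = ysym W (\<lambda>_. 0) 0 # v" and "v \<in> lang (yblocks_rexp W m)"
      by (auto simp: ywords_rexp_def conc_def)
    then obtain q where v: "v = map (ysym W q) [1..<Suc (2 * m)]" and q: "\<forall>k. q k < W"
      unfolding lang_yblocks_rexp[OF assms] by blast
    define q' where "q' = q(0 := 0)"
    have rest: "map (ysym W q') [1..<Suc (2 * m)] = map (ysym W q) [1..<Suc (2 * m)]"
      by (rule map_cong[OF refl], rule ysym_cong) (auto simp: q'_def)
    have "ysym W q' 0 = ysym W (\<lambda>_. 0) 0"
      by (rule first) (simp add: q'_def)
    then have "w = yword W q' (Suc (2 * m))"
      unfolding split w v rest by simp
    moreover have "\<forall>k. q' k < W" "q' 0 = 0" using q assms by (simp_all add: q'_def)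
    ultimately show "w \<in> {yword W q (Suc (2 * m)) | q. (\<forall>k. q k < W) \<and> q 0 = 0}" by blast
  next
    fix w assume "w \<in> {yword W q (Suc (2 * m)) | q. (\<forall>k. q k < W) \<and> q 0 = 0}"
    then obtain q where w: "w = yword W q (Suc (2 * m))" and q: "\<forall>k. q k < W" "q 0 = 0"
      by blast
    have "map (ysym W q) [1..<Suc (2 * m)] \<in> lang (yblocks_rexp W m)"
      unfolding lang_yblocks_rexp[OF assms] using q(1) by blast
    then show "w \<in> lang (ywords_rexp W m)"
      unfolding w split first[of q, OF q(2)] by (auto simp: ywords_rexp_def conc_def)
  qed
qed

lemma length_xblank [simp]: "length (xblank W k js) = length js"
  by (simp add: xblank_def)

lemma length_xwin: "q k < W \<Longrightarrow> length (xwin W q k) = W"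
  by (simp add: xwin_def)

lemma length_xword: "\<forall>k. q k < W \<Longrightarrow> length (xword W q K) = K * W"
  by (induction K) (simp_all add: xword_def length_xwin)

lemma length_yword [simp]: "length (yword W q K) = K"
  by (simp add: yword_def)

lemma xwin_shuffle_gap: "zwin W q k \<in> shuffles (xwin W q k) [ysym W q k]"
proof -
  let ?A = "xblank W k [0..<q k]"
  let ?B = "xblank W k [Suc (q k)..<W] @ [XSym (k * Suc W + W) (xdatum W q k)]"
  have "?A @ ysym W q k # ?B \<in> shuffles (?A @ ?B) ([] @ [ysym W q k])"
    by (intro shuffles_append Cons_in_shuffles_rightI) simp_all
  then show ?thesis by (simp add: zwin_def xwin_def)
qed

lemma zword_in_shuffles: "zword W q K \<in> shuffles (xword W q K) (yword W q K)"
proof (induction K)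
  case (Suc K)
  from shuffles_append[OF Suc.IH xwin_shuffle_gap] show ?case
    by (simp add: zword_def xword_def yword_def)
qed (simp add: zword_def xword_def yword_def)

lemma positions_zwin:
  assumes "q k < W"
  shows "map sym_pos (zwin W q k) = [k * Suc W..<k * Suc W + Suc W]"
proof -
  define s where "s = k * Suc W"
  have split: "[s..<s + W] = [s..<s + q k] @ (s + q k) # [Suc (s + q k)..<s + W]"
    using assms by (intro upt_split_at) auto
  have "map sym_pos (zwin W q k) = [s..<s + W] @ [s + W]"
    unfolding split
    by (simp add: zwin_def xblank_def ysym_def comp_def map_plus_upt s_def del: mult_Suc_right)
  then show ?thesis by (simp add: s_def del: mult_Suc_right)
qed

lemma length_zwin: "q k < W \<Longrightarrow> length (zwin W q k) = Suc W"
  by (simp add: zwin_def)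

lemma positioned_zword: "\<forall>k. q k < W \<Longrightarrow> positioned sym_pos 0 (zword W q K)"
proof (induction K)
  case (Suc K)
  have "length (zword W q K) = K * Suc W"
    using Suc.prems by (induction K) (simp_all add: zword_def length_zwin)
  moreover have "positioned sym_pos (K * Suc W) (zwin W q K)"
    using Suc.prems by (simp add: positioned_def positions_zwin length_zwin del: mult_Suc_right)
  ultimately show ?case
    using Suc by (simp add: zword_def positioned_append)
qed (simp add: zword_def)

lemma sym_pos_ysym [simp]: "sym_pos (ysym W q k) = k * Suc W + q k"
  by (simp add: ysym_def)

lemma xblank_in_xwin: "j < W \<Longrightarrow> j \<noteq> q k \<Longrightarrow> XSym (k * Suc W + j) None \<in> set (xwin W q k)"
  by (cases "j < q k") (auto simp: xwin_def xblank_def)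

lemma aligned_gaps_agree:
  assumes z: "z \<in> shuffles (xword W qx K) (yword W qy K)" "positioned sym_pos 0 z"
    and "qy k < W" "k < K"
  shows "qx k = qy k"
proof (rule ccontr)
  assume "qx k \<noteq> qy k"
  then have "XSym (k * Suc W + qy k) None \<in> set (xword W qx K)"
    using assms(3,4) xblank_in_xwin[of "qy k" W qx k] by (auto simp: xword_def)
  then have "k * Suc W + qy k \<in> sym_pos ` set (xword W qx K)" by force
  moreover have "k * Suc W + qy k \<in> sym_pos ` set (yword W qy K)"
    using assms(4) by (force simp: yword_def)
  ultimately show False using positioned_shuffles_disjoint[OF z] by blast
qed

text \<open>An aligned interleaving is determined by its multiset of letters, so it must be the
  canonical interleaving \<open>zword\<close>.\<close>

lemma aligned_shuffle_eq_zword: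
  assumes z: "z \<in> shuffles (xword W qx K) (yword W qy K)" "positioned sym_pos 0 z"
    and bounded: "\<forall>k. qx k < W" "\<forall>k. qy k < W"
  shows "z = zword W qx K" and "\<forall>k<K. qx k = qy k"
proof -
  show agree: "\<forall>k<K. qx k = qy k"
    using aligned_gaps_agree[OF z] bounded(2) by blast
  have "yword W qy K = yword W qx K"
    unfolding yword_def by (rule map_cong[OF refl], rule ysym_cong) (use agree in auto)
  then have "mset z = mset (zword W qx K)"
    using mset_shuffles[OF z(1)] mset_shuffles[OF zword_in_shuffles] by simp
  then show "z = zword W qx K"
    using positioned_unique[OF z(2) positioned_zword[OF bounded(1)]] by blast
qed

definition gap_sequences :: "nat \<Rightarrow> nat \<Rightarrow> (nat \<Rightarrow> nat) set" where
  "gap_sequences W n = {q. (\<forall>k. q k < W) \<and> q 0 = 0 \<and> q n = 0}"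

lemma aligned_shuffles_windows:
  assumes "0 < W"
  shows "{z \<in> shuffle_lang (lang (xwords_rexp W m)) (lang (ywords_rexp W m)). positioned sym_pos 0 z} =
    (\<lambda>q. zword W q (Suc (2 * m))) ` gap_sequences W (2 * m)" (is "?aligned = _")
proof (intro subset_antisym subsetI)
  fix z assume "z \<in> ?aligned"
  then obtain qx qy where z: "z \<in> shuffles (xword W qx (Suc (2 * m))) (yword W qy (Suc (2 * m)))"
    "positioned sym_pos 0 z" and qx: "\<forall>k. qx k < W" "qx (2 * m) = 0"
    and qy: "\<forall>k. qy k < W" "qy 0 = 0"
    by (auto simp: shuffle_lang_def lang_xwords_rexp[OF assms] lang_ywords_rexp[OF assms])
  from aligned_shuffle_eq_zword[OF z qx(1) qy(1)] qx qy
  show "z \<in> (\<lambda>q. zword W q (Suc (2 * m))) ` gap_sequences W (2 * m)"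
    by (auto simp: gap_sequences_def)
next
  fix z assume "z \<in> (\<lambda>q. zword W q (Suc (2 * m))) ` gap_sequences W (2 * m)"
  then obtain q where "z = zword W q (Suc (2 * m))" "q \<in> gap_sequences W (2 * m)" by blast
  then show "z \<in> ?aligned"
    using zword_in_shuffles[of W q] positioned_zword[of q W]
    by (auto simp: shuffle_lang_def lang_xwords_rexp[OF assms] lang_ywords_rexp[OF assms]
        gap_sequences_def)
qed

fun datum :: "sym \<Rightarrow> nat option option" where
  "datum (XSym p d) = Some d"
| "datum (YSym p d) = Some d"
| "datum _ = None"

lemma hom_letter_datum [simp]:
  "hom_letter datum (XSym p d) = (case d of None \<Rightarrow> [] | Some e \<Rightarrow> [e])"
  "hom_letter datum (YSym p d) = (case d of None \<Rightarrow> [] | Some e \<Rightarrow> [e])"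
  by (simp_all add: hom_letter_def split: option.split)

lemma hom_word_datum_xblank [simp]: "hom_word datum (xblank W k js) = []"
  by (induction js) (simp_all add: xblank_def)

lemma hom_word_datum_zwin: "hom_word datum (zwin W q k) = (if k = 0 then [] else [gap_diff W q k])"
  by (simp add: zwin_def ysym_def xdatum_def ydatum_def)

lemma hom_word_datum_zword:
  "hom_word datum (zword W q (Suc n)) = map (\<lambda>i. gap_diff W q (Suc i)) [0..<n]"
  by (induction n) (simp_all add: zword_def hom_word_datum_zwin)

lemma zword_in_hom_dom: "zword W q K \<in> lists (hom_dom datum)"
  by (auto simp: zword_def zwin_def xblank_def ysym_def hom_dom_def)

lemma sum_gap_diffs_mod:
  assumes "\<forall>k. q k < W"
  shows "(sum_list (map (\<lambda>i. gap_diff W q (Suc i)) [0..<n]) + q 0) mod W = q n mod W"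
proof (induction n)
  case (Suc n)
  let ?S = "\<lambda>n. sum_list (map (\<lambda>i. gap_diff W q (Suc i)) [0..<n])"
  have "?S (Suc n) + q 0 = (?S n + q 0) + gap_diff W q (Suc n)"
    by simp
  then have "(?S (Suc n) + q 0) mod W = ((?S n + q 0) mod W + gap_diff W q (Suc n)) mod W"
    by (simp only: mod_add_left_eq)
  also have "\<dots> = (q n mod W + gap_diff W q (Suc n)) mod W"
    by (simp only: Suc.IH)
  also have "\<dots> = (q n + (q (Suc n) + W - q n)) mod W"
    by (simp only: gap_diff_def diff_Suc_1 mod_add_left_eq mod_add_right_eq)
  also have "q n + (q (Suc n) + W - q n) = q (Suc n) + W"
    using assms[rule_format, of n] by linarith
  finally show ?case by simp
qed simp

lemma mod_add_sub_left_cancel: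
  "a < W \<Longrightarrow> b < (W::nat) \<Longrightarrow> ((a + b) mod W + W - a) mod W = b"
proof (cases "a + b < W")
  case False
  assume "a < W" "b < W"
  then have "(a + b) mod W = a + b - W" using False by (simp add: le_mod_geq)
  with \<open>a < W\<close> \<open>b < W\<close> False show ?thesis by simp
qed simp

text \<open>The data of the aligned interleavings are exactly the words with sum \<open>0\<close> modulo \<open>W\<close>: the
  gap sequence \<open>q\<close> is recovered from the data as their prefix sums.\<close>

lemma gap_diffs_gap_sequences:
  assumes "0 < W"
  shows "(\<lambda>q. map (\<lambda>i. gap_diff W q (Suc i)) [0..<n]) ` gap_sequences W n = sum_mod_words W n 0"
proof (intro subset_antisym subsetI)
  fix js assume "js \<in> (\<lambda>q. map (\<lambda>i. gap_diff W q (Suc i)) [0..<n]) ` gap_sequences W n"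
  then obtain q where js: "js = map (\<lambda>i. gap_diff W q (Suc i)) [0..<n]"
    and q: "q \<in> gap_sequences W n" by blast
  have "sum_list js mod W = 0"
    using sum_gap_diffs_mod[of q W n] q by (simp add: js gap_sequences_def)
  then show "js \<in> sum_mod_words W n 0"
    using assms by (auto simp: js sum_mod_words_def gap_diff_def)
next
  fix js assume js: "js \<in> sum_mod_words W n 0"
  define q where "q k = sum_list (take k js) mod W" for k
  have "gap_diff W q (Suc i) = js ! i" if "i < n" for i
  proof -
    have "q (Suc i) = (q i + js ! i) mod W"
      using that js by (simp add: q_def sum_mod_words_def take_Suc_conv_app_nth mod_add_left_eq)
    moreover have "js ! i \<in> set js" using that js by (simp add: sum_mod_words_def)
    then have "js ! i < W" using js by (auto simp: sum_mod_words_def)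
    ultimately show ?thesis
      using mod_add_sub_left_cancel[of "q i" W "js ! i"] assms by (simp add: gap_diff_def q_def)
  qed
  then have "map (\<lambda>i. gap_diff W q (Suc i)) [0..<n] = js"
    using js by (intro nth_equalityI) (auto simp: sum_mod_words_def)
  moreover have "q \<in> gap_sequences W n"
    using assms js by (simp add: gap_sequences_def q_def sum_mod_words_def)
  ultimately show "js \<in> (\<lambda>q. map (\<lambda>i. gap_diff W q (Suc i)) [0..<n]) ` gap_sequences W n" by blast
qed

lemma length_shuffle_windows:
  assumes "0 < W" "z \<in> shuffle_lang (lang (xwords_rexp W m)) (lang (ywords_rexp W m))"
  shows "length z = Suc (2 * m) * Suc W"
  using assms by (auto simp: shuffle_lang_def lang_xwords_rexp lang_ywords_rexp length_xword
      dest!: length_shuffles)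

lemma rpn_len_ge_if_lang_shuffle_windows:
  assumes "0 < W" "0 < m"
    and r: "lang r = shuffle_lang (lang (xwords_rexp W m)) (lang (ywords_rexp W m))"
  shows "W ^ floor_log (2 * m) \<le> rpn_len r"
proof -
  let ?K = "Suc (2 * m)"
  let ?r = "hom_rexp datum (pos_restrict sym_pos 0 (?K * Suc W) r)"
  have "\<forall>z\<in>lang r. length z = ?K * Suc W"
    using length_shuffle_windows[OF assms(1)] r by blast
  then have "lang ?r =
      hom_word datum ` ((\<lambda>q. zword W q ?K) ` gap_sequences W (2 * m) \<inter> lists (hom_dom datum))"
    by (simp add: lang_hom_rexp lang_pos_restrict r aligned_shuffles_windows[OF assms(1)])
  also have "\<dots> = (\<lambda>q. map (\<lambda>i. gap_diff W q (Suc i)) [0..<2 * m]) ` gap_sequences W (2 * m)"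
    using zword_in_hom_dom
    by (simp add: image_image hom_word_datum_zword Int_absorb2 image_subset_iff)
  also have "\<dots> = sum_mod_words W (2 * m) 0"
    by (rule gap_diffs_gap_sequences[OF assms(1)])
  finally have lang_r: "lang ?r = sum_mod_words W (2 * m) 0" .
  have "W ^ floor_log (2 * m) \<le> rpn_len ?r"
    by (rule rpn_len_ge_if_lang_sum_mod_words[OF assms(1) _ assms(1) lang_r]) (use assms(2) in simp)
  also have "\<dots> \<le> rpn_len r" by (simp add: rpn_len_pos_restrict_le)
  finally show ?thesis .
qed

lemma affine_le_monomial:
  fixes W :: nat
  assumes "0 < W" "a \<le> b * W ^ i" "k \<le> c * W ^ j" "i + j = p" "b * c + b + 1 \<le> d"
  shows "a * (k + 1) + 1 \<le> d * W ^ p"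
proof -
  have "a * (k + 1) + 1 \<le> b * W ^ i * (c * W ^ j + 1) + 1"
    using assms(2,3) by (intro add_mono mult_mono) auto
  also have "\<dots> = b * c * W ^ p + b * W ^ i + 1" using assms(4) by (auto simp: power_add algebra_simps)
  also have "\<dots> \<le> b * c * W ^ p + b * W ^ p + W ^ p"
    using assms(1,4) by (intro add_mono mult_le_mono2 power_increasing) (auto simp: Suc_le_eq)
  also have "\<dots> = (b * c + b + 1) * W ^ p" by (simp add: algebra_simps)
  also have "\<dots> \<le> d * W ^ p" using assms(5) by (rule mult_le_mono1)
  finally show ?thesis .
qed

lemma pow_le_pow4: "0 < (W::nat) \<Longrightarrow> i \<le> 4 \<Longrightarrow> W ^ i \<le> W ^ 4"
  by (rule power_increasing) auto

lemma rpn_len_blocks_power: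
  assumes "0 < W" "l \<le> W"
  shows "rpn_len (prod_rexp (replicate l (blocks_rexp W))) \<le> 7 * W ^ 3"
proof -
  have "rpn_len (blocks_rexp W) \<le> W * ((2 * W + 1) + 1) + 1"
    unfolding blocks_rexp_def
    by (rule order_trans[OF rpn_len_words_rexp_le[of _ W]]) (auto simp: block_def)
  also have "\<dots> \<le> 5 * W ^ 2"
    using assms(1) by (intro affine_le_monomial[where b = 1 and i = 1 and c = 3 and j = 1]) auto
  finally have "rpn_len (prod_rexp (replicate l (blocks_rexp W))) \<le> l * (5 * W ^ 2 + 1) + 1"
    by (intro order_trans[OF rpn_len_prod_rexp_le[of _ "5 * W ^ 2"]]) auto
  also have "\<dots> \<le> 7 * W ^ 3"
    using assms by (intro affine_le_monomial[where b = 1 and i = 1 and c = 5 and j = 2]) auto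
  finally show ?thesis .
qed

lemma rpn_len_pads_rexp: "0 < W \<Longrightarrow> rpn_len (pads_rexp W W) \<le> 9 * W ^ 3"
proof -
  assume W: "0 < W"
  have "rpn_len (pads_rexp W W) \<le> Suc W * ((2 * (W * W) + 1) + 1) + 1"
    unfolding pads_rexp_def by (rule order_trans[OF rpn_len_words_rexp_le[of _ "W * W"]]) auto
  also have "\<dots> \<le> 9 * W ^ 3"
    using W by (intro affine_le_monomial[where b = 2 and i = 1 and c = 3 and j = 2])
      (auto simp: power2_eq_square)
  finally show ?thesis .
qed

lemma rpn_len_block_letters_rexp: "0 < W \<Longrightarrow> rpn_len (block_letters_rexp W (W * W)) \<le> 11 * W ^ 3"
proof -
  assume W: "0 < W"
  have "rpn_len (words_rexp (map (\<lambda>a. [a]) (Pad # map Mark [0..<W]))) \<le> Suc W * ((2 * 1 + 1) + 1) + 1"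
    by (rule order_trans[OF rpn_len_words_rexp_le[of _ 1]]) auto
  also have "\<dots> \<le> 9 * W ^ 1"
    using W by (intro affine_le_monomial[where b = 2 and i = 1 and c = 3 and j = 0]) auto
  finally have "rpn_len (block_letters_rexp W (W * W)) \<le> (W * W) * (9 * W ^ 1 + 1) + 1"
    unfolding block_letters_rexp_def
    by (intro order_trans[OF rpn_len_prod_rexp_le[of _ "9 * W ^ 1"]]) auto
  also have "\<dots> \<le> 11 * W ^ 3"
    using W by (intro affine_le_monomial[where b = 1 and i = 2 and c = 9 and j = 1])
      (auto simp: power2_eq_square)
  finally show ?thesis .
qed

lemma pair_choices_bounded: "q \<in> set (pair_choices W k) \<Longrightarrow> q j < W"
  by (auto simp: pair_choices_def)

lemma rpn_len_prod_pair_block_rexp: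
  assumes "0 < W" "m \<le> W"
    and len: "\<And>q k. \<forall>j. q j < W \<Longrightarrow> length (win q k) + length (win q (Suc k)) \<le> L"
    and L: "2 * L + 1 \<le> c * W ^ j"
  shows "rpn_len (prod_rexp (map (\<lambda>i. pair_block_rexp W win (2 * i + e)) [0..<m]))
    \<le> (c + 4) * W ^ (3 + j)"
proof -
  have "rpn_len (pair_block_rexp W win k) \<le> (W * W) * ((2 * L + 1) + 1) + 1" for k
    unfolding pair_block_rexp_def using len pair_choices_bounded
    by (intro order_trans[OF rpn_len_words_rexp_le[of _ L]]) (auto simp: length_pair_choices)
  also have "(W * W) * ((2 * L + 1) + 1) + 1 \<le> (c + 2) * W ^ (2 + j)"
    using assms(1) L
    by (intro affine_le_monomial[where b = 1 and i = 2]) (auto simp: power2_eq_square)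
  finally have "rpn_len (prod_rexp (map (\<lambda>i. pair_block_rexp W win (2 * i + e)) [0..<m]))
      \<le> m * ((c + 2) * W ^ (2 + j) + 1) + 1"
    by (intro order_trans[OF rpn_len_prod_rexp_le[of _ "(c + 2) * W ^ (2 + j)"]]) auto
  also have "\<dots> \<le> (c + 4) * W ^ (3 + j)"
    using assms(1,2)
    by (intro affine_le_monomial[where b = 1 and i = 1 and c = "c + 2" and j = "2 + j"]) auto
  finally show ?thesis .
qed

lemma rpn_len_xwords_rexp:
  assumes W: "0 < W" and m: "m \<le> W"
  shows "rpn_len (xwords_rexp W m) \<le> 13 * W ^ 4"
proof -
  have "rpn_len (prod_rexp (map (\<lambda>i. pair_block_rexp W (xwin W) (2 * i + 0)) [0..<m]))
      \<le> (5 + 4) * W ^ (3 + 1)"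
    using W m by (intro rpn_len_prod_pair_block_rexp) (auto simp: length_xwin)
  then have "rpn_len (xblocks_rexp W m) \<le> 9 * W ^ 4"
    by (simp add: xblocks_rexp_def)
  moreover have "rpn_len (xwords_rexp W m) = rpn_len (xblocks_rexp W m) + (2 * W + 1) + 1"
    using W by (simp add: xwords_rexp_def length_xwin)
  moreover have "W \<le> W ^ 4" "1 \<le> W ^ 4"
    using pow_le_pow4[OF W, of 1] pow_le_pow4[OF W, of 0] by simp_all
  ultimately show ?thesis by linarith
qed

lemma rpn_len_ywords_rexp:
  assumes W: "0 < W" and m: "m \<le> W"
  shows "rpn_len (ywords_rexp W m) \<le> 11 * W ^ 3"
proof -
  have "rpn_len (yblocks_rexp W m) \<le> (5 + 4) * W ^ (3 + 0)"
    unfolding yblocks_rexp_def using W m by (intro rpn_len_prod_pair_block_rexp) auto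
  moreover have "1 \<le> W ^ 3" using W by simp
  ultimately show ?thesis by (simp add: ywords_rexp_def)
qed

definition block_syms :: "sym set" where
  "block_syms = insert Pad (range Mark)"

definition x_syms :: "sym set" where
  "x_syms = {XSym p d | p d. True}"

definition y_syms :: "sym set" where
  "y_syms = {YSym p d | p d. True}"

lemma lang_blocks_pads_rexp_subset:
  assumes "0 < l"
  shows "lang (blocks_pads_rexp W l T) \<subseteq> lists block_syms - {[]}"
proof
  fix w assume "w \<in> lang (blocks_pads_rexp W l T)"
  then obtain js t where w: "w = concat (map block js) @ replicate (t * W) Pad" "length js = l"
    by (auto simp: lang_blocks_pads_rexp)
  moreover obtain j js' where "js = j # js'" using assms w(2) by (cases js) auto
  ultimately show "w \<in> lists block_syms - {[]}" by (auto simp: block_syms_def block_def)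
qed

lemma lang_block_letters_rexp_subset: "0 < N \<Longrightarrow> lang (block_letters_rexp W N) \<subseteq> lists block_syms - {[]}"
  by (auto simp: lang_block_letters_rexp block_syms_def)

lemma lang_xwords_rexp_subset: "0 < W \<Longrightarrow> lang (xwords_rexp W m) \<subseteq> lists x_syms - {[]}"
  by (auto simp: lang_xwords_rexp xword_def xwin_def xblank_def x_syms_def)

lemma lang_ywords_rexp_subset: "0 < W \<Longrightarrow> lang (ywords_rexp W m) \<subseteq> lists y_syms - {[]}"
  by (auto simp: lang_ywords_rexp yword_def ysym_def y_syms_def)

lemma shuffle_lang_Un_Int_lists:
  assumes "A \<subseteq> lists C - {[]}" "B \<subseteq> lists C - {[]}" "X \<subseteq> lists P" "Y \<subseteq> lists P" "C \<inter> P = {}"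
  shows "shuffle_lang (A \<union> X) (B \<union> Y) \<inter> lists P = shuffle_lang X Y"
proof (intro subset_antisym subsetI)
  fix z assume "z \<in> shuffle_lang (A \<union> X) (B \<union> Y) \<inter> lists P"
  then obtain u v where uv: "u \<in> A \<union> X" "v \<in> B \<union> Y" "z \<in> shuffles u v" and "z \<in> lists P"
    by (auto simp: shuffle_lang_def)
  then have "u \<in> lists P" "v \<in> lists P" using set_shuffles[OF uv(3)] by auto
  moreover have False if "w \<in> lists C - {[]}" "w \<in> lists P" for w
    using that assms(5) by (cases w) auto
  ultimately have "u \<notin> A" "v \<notin> B" using assms(1,2) by blast+
  with uv show "z \<in> shuffle_lang X Y" by (auto simp: shuffle_lang_def)
next
  fix z assume "z \<in> shuffle_lang X Y"
  then obtain u v where "u \<in> X" "v \<in> Y" "z \<in> shuffles u v" by (auto simp: shuffle_lang_def)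
  with assms(3,4) show "z \<in> shuffle_lang (A \<union> X) (B \<union> Y) \<inter> lists P"
    using set_shuffles by (fastforce simp: shuffle_lang_def)
qed

text \<open>Both parts (a) and (b) use the same pair of languages: each is the union of a language for
  the intersection and one for the shuffle, over disjoint alphabets, so that the unwanted
  combinations disappear in the intersection and can be filtered out of the shuffle.\<close>

definition left_rexp :: "nat \<Rightarrow> sym rexp" where
  "left_rexp W = Plus (blocks_pads_rexp W W W) (xwords_rexp W W)"

definition right_rexp :: "nat \<Rightarrow> sym rexp" where
  "right_rexp W = Plus (block_letters_rexp W (W * W)) (ywords_rexp W W)"

lemma star_free_left_right_rexp: "star_free (left_rexp W)" "star_free (right_rexp W)"
  by (simp_all add: left_rexp_def right_rexp_def blocks_pads_rexp_def blocks_rexp_def pads_rexp_def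
      xwords_rexp_def xblocks_rexp_def ywords_rexp_def yblocks_rexp_def pair_block_rexp_def
      block_letters_rexp_def)

lemma lang_left_Int_right:
  assumes "0 < W"
  shows "lang (left_rexp W) \<inter> lang (right_rexp W) = padded_blocks W W (W * W)"
proof -
  have "lang (blocks_pads_rexp W W W) \<inter> lang (ywords_rexp W W) = {}"
    "lang (xwords_rexp W W) \<inter> lang (block_letters_rexp W (W * W)) = {}"
    "lang (xwords_rexp W W) \<inter> lang (ywords_rexp W W) = {}"
    using lang_blocks_pads_rexp_subset[of W W W] lang_block_letters_rexp_subset[of "W * W" W]
      lang_xwords_rexp_subset[OF assms, of W] lang_ywords_rexp_subset[OF assms, of W] assms
    by (fastforce simp: block_syms_def x_syms_def y_syms_def neq_Nil_conv)+
  then show ?thesis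
    using blocks_pads_Int_block_letters[OF assms, of "W * W" W W] assms
    by (auto simp: left_rexp_def right_rexp_def)
qed

lemma rpn_left_Int_right_ge:
  assumes "0 < W"
  shows "W ^ floor_log W \<le> rpn (lang (left_rexp W) \<inter> lang (right_rexp W))"
proof (rule le_rpn)
  show "finite (lang (left_rexp W) \<inter> lang (right_rexp W))"
    by (simp add: finite_lang_star_free star_free_left_right_rexp)
  fix r assume "lang r = lang (left_rexp W) \<inter> lang (right_rexp W)"
  with assms show "W ^ floor_log W \<le> rpn_len r"
    by (intro rpn_len_ge_if_lang_padded_blocks[of W W "W * W"]) (simp_all add: lang_left_Int_right)
qed

lemma rpn_shuffle_left_right_ge:
  assumes "0 < W"
  shows "W ^ floor_log W \<le> rpn (shuffle_lang (lang (left_rexp W)) (lang (right_rexp W)))"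
proof (rule le_rpn)
  show "finite (shuffle_lang (lang (left_rexp W)) (lang (right_rexp W)))"
    by (simp add: finite_shuffle_lang finite_lang_star_free star_free_left_right_rexp)
  fix r assume r: "lang r = shuffle_lang (lang (left_rexp W)) (lang (right_rexp W))"
  let ?keep = "\<lambda>a. if a \<in> x_syms \<union> y_syms then Some (Some a) else None"
  have "lang (hom_rexp ?keep r) = shuffle_lang (lang (xwords_rexp W W)) (lang (ywords_rexp W W))"
    unfolding lang_hom_rexp_restrict r left_rexp_def right_rexp_def lang.simps
    using lang_blocks_pads_rexp_subset[of W W W] lang_block_letters_rexp_subset[of "W * W" W]
      lang_xwords_rexp_subset[OF assms, of W] lang_ywords_rexp_subset[OF assms, of W] assms
    by (intro shuffle_lang_Un_Int_lists[where C = block_syms])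
      (auto simp: block_syms_def x_syms_def y_syms_def)
  then have "W ^ floor_log (2 * W) \<le> rpn_len (hom_rexp ?keep r)"
    by (rule rpn_len_ge_if_lang_shuffle_windows[OF assms assms])
  moreover have "W ^ floor_log W \<le> W ^ floor_log (2 * W)"
    using assms by (intro power_increasing floor_log_le_iff) auto
  ultimately show "W ^ floor_log W \<le> rpn_len r" by simp
qed

lemma rpn_length_slice_ge:
  assumes "0 < W" "W * W \<le> n"
  shows "W ^ floor_log W \<le> rpn {w \<in> lang (pads_star_rexp W W). length w = n}"
proof (rule le_rpn)
  have "padded_blocks W W n = lang (blocks_pads_rexp W W n) \<inter> lang (block_letters_rexp W n)"
    using blocks_pads_Int_block_letters[OF assms(1), of n n W] assms(1) by simp
  moreover have "finite (lang (blocks_pads_rexp W W n))"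
    by (rule finite_lang_star_free) (simp add: blocks_pads_rexp_def blocks_rexp_def pads_rexp_def)
  ultimately show "finite {w \<in> lang (pads_star_rexp W W). length w = n}"
    by (simp add: length_slice_pads_star_rexp)
  fix r assume "lang r = {w \<in> lang (pads_star_rexp W W). length w = n}"
  with assms show "W ^ floor_log W \<le> rpn_len r"
    by (intro rpn_len_ge_if_lang_padded_blocks[of W W n]) (simp_all add: length_slice_pads_star_rexp)
qed

lemma rpn_len_left_rexp:
  assumes "0 < W"
  shows "rpn_len (left_rexp W) \<le> 32 * W ^ 4"
proof -
  have "rpn_len (left_rexp W) =
      rpn_len (prod_rexp (replicate W (blocks_rexp W))) + rpn_len (pads_rexp W W)
      + rpn_len (xwords_rexp W W) + 2"
    by (simp add: left_rexp_def blocks_pads_rexp_def)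
  moreover have "1 \<le> W ^ 4" using assms by simp
  ultimately show ?thesis
    using rpn_len_blocks_power[OF assms order_refl] rpn_len_pads_rexp[OF assms]
      rpn_len_xwords_rexp[OF assms order_refl] pow_le_pow4[OF assms, of 3] by linarith
qed

lemma rpn_len_right_rexp:
  assumes "0 < W"
  shows "rpn_len (right_rexp W) \<le> 32 * W ^ 4"
proof -
  have "rpn_len (right_rexp W) = rpn_len (block_letters_rexp W (W * W)) + rpn_len (ywords_rexp W W) + 1"
    by (simp add: right_rexp_def)
  moreover have "1 \<le> W ^ 4" using assms by simp
  ultimately show ?thesis
    using rpn_len_block_letters_rexp[OF assms] rpn_len_ywords_rexp[OF assms order_refl]
      pow_le_pow4[OF assms, of 3] by linarith
qed

lemma rpn_len_pads_star_rexp: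
  assumes "0 < W"
  shows "rpn_len (pads_star_rexp W W) \<le> 32 * W ^ 4"
proof -
  have "rpn_len (pads_star_rexp W W) = rpn_len (prod_rexp (replicate W (blocks_rexp W))) + 2 * W + 3"
    by (simp add: pads_star_rexp_def)
  moreover have "1 \<le> W ^ 4" "W \<le> W ^ 4" using assms pow_le_pow4[OF assms, of 1] by simp_all
  ultimately show ?thesis
    using rpn_len_blocks_power[OF assms order_refl] pow_le_pow4[OF assms, of 3] by linarith
qed

definition scale :: "nat \<Rightarrow> nat" where
  "scale n = 2 ^ (floor_log n div 4)"

lemma scale_pos: "0 < scale n"
  by (simp add: scale_def)

lemma scale_pow4_le: "0 < n \<Longrightarrow> scale n ^ 4 \<le> n"
proof -
  assume "0 < n"
  have "scale n ^ 4 = 2 ^ (floor_log n div 4 * 4)" by (simp add: scale_def power_mult)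
  also have "\<dots> \<le> 2 ^ floor_log n" by (rule power_increasing) simp_all
  also have "\<dots> \<le> n" using floor_log_exp2_le[OF \<open>0 < n\<close>] .
  finally show ?thesis .
qed

lemma powr_le_scale_power:
  assumes "256 \<le> n"
  shows "real n powr (1 / 64 * ln (real n)) \<le> real (scale n ^ floor_log (scale n))"
proof -
  define k where "k = floor_log n div 4"
  have "floor_log (2 ^ 8) \<le> floor_log n" using assms by (intro floor_log_le_iff) simp
  then have "8 \<le> floor_log n" by (simp only: floor_log_power)
  then have "8 div 4 \<le> k" unfolding k_def by (rule div_le_mono)
  then have k: "1 \<le> k" by simp
  have "n < 2 * 2 ^ floor_log n" by (rule floor_log_exp2_gt)
  also have "\<dots> \<le> 2 ^ (4 * k + 4)" by (simp add: k_def flip: power_Suc)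
  finally have "real n < 2 ^ (4 * k + 4)" by (metis of_nat_less_numeral_power_cancel_iff)
  then have "ln (real n) < real (4 * k + 4) * ln 2"
    using assms by (subst ln_realpow[symmetric]) (auto simp: ln_less_cancel_iff)
  then have "ln (real n) < 4 * ln 2 + 4 * (real k * ln 2)" by (simp add: algebra_simps)
  moreover have ln2: "0 < ln (2::real)" "ln (2::real) \<le> 1" using ln_le_minus_one[of 2] by auto
  moreover have "ln 2 \<le> real k * ln 2" using k ln2 by simp
  ultimately have ln_le: "ln (real n) \<le> 8 * real k * ln 2" by linarith
  have ln_ge: "0 \<le> ln (real n)" using assms by simp
  have "1 / 64 * ln (real n) * ln (real n) \<le> 1 / 64 * (8 * real k * ln 2) * (8 * real k * ln 2)"
    using ln_le ln_ge by (intro mult_mono) auto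
  also have "\<dots> = real (k * k) * ln 2 * ln 2" by simp
  also have "\<dots> \<le> real (k * k) * ln 2" using ln2 by (intro mult_left_le) auto
  finally have "real n powr (1 / 64 * ln (real n)) \<le> exp (real (k * k) * ln 2)"
    using assms by (simp add: powr_def)
  also have "\<dots> = 2 powr real (k * k)" by (simp add: powr_def)
  also have "\<dots> = 2 ^ (k * k)" by (rule powr_realpow) simp
  also have "\<dots> = real (scale n ^ floor_log (scale n))"
    by (simp add: scale_def k_def power_mult)
  finally show ?thesis .
qed

lemma real_le_mult_of_nat_le: "a \<le> c * n \<Longrightarrow> real a \<le> real c * real n"
  by (metis of_nat_le_iff of_nat_mult)

lemma intersection_and_shuffle_blowup:
  "\<exists>(L1 :: nat \<Rightarrow> nat list set) (L2 :: nat \<Rightarrow> nat list set) C c.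
            c > 0 \<and>
            (\<forall>\<^sub>F n in sequentially.
               finite (L1 n) \<and> finite (L2 n) \<and>
               (\<exists>r1 r2. lang r1 = L1 n \<and> lang r2 = L2 n \<and>
                   real (rpn_len r1) \<le> C * real n \<and> real (rpn_len r2) \<le> C * real n) \<and>
               real (rpn (L1 n \<inter> L2 n)) \<ge> real n powr (c * ln (real n)) \<and>
               real (rpn (shuffle_lang (L1 n) (L2 n))) \<ge> real n powr (c * ln (real n)))"
proof -
  define L1 where "L1 n = map to_nat ` lang (left_rexp (scale n))" for n
  define L2 where "L2 n = map to_nat ` lang (right_rexp (scale n))" for n
  let ?encode = "hom_rexp (\<lambda>a. Some (Some (to_nat a)))"
  have pointwise: "finite (L1 n) \<and> finite (L2 n) \<and>
      (\<exists>r1 r2. lang r1 = L1 n \<and> lang r2 = L2 n \<and>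
        real (rpn_len r1) \<le> real 32 * real n \<and> real (rpn_len r2) \<le> real 32 * real n) \<and>
      real (rpn (L1 n \<inter> L2 n)) \<ge> real n powr (1 / 64 * ln (real n)) \<and>
      real (rpn (shuffle_lang (L1 n) (L2 n))) \<ge> real n powr (1 / 64 * ln (real n))"
    if n: "256 \<le> n" for n
  proof -
    let ?W = "scale n"
    have W: "0 < ?W" by (rule scale_pos)
    have size: "?W ^ 4 \<le> n" using scale_pow4_le[of n] n by simp
    have bound: "real n powr (1 / 64 * ln (real n)) \<le> real (?W ^ floor_log ?W)"
      by (rule powr_le_scale_power[OF n])
    have fin: "finite (L1 n)" "finite (L2 n)"
      by (simp_all add: L1_def L2_def finite_lang_star_free star_free_left_right_rexp)
    have "rpn_len (left_rexp ?W) \<le> 32 * n" "rpn_len (right_rexp ?W) \<le> 32 * n"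
      using rpn_len_left_rexp[OF W] rpn_len_right_rexp[OF W] size by linarith+
    then have ex: "\<exists>r1 r2. lang r1 = L1 n \<and> lang r2 = L2 n \<and>
        real (rpn_len r1) \<le> real 32 * real n \<and> real (rpn_len r2) \<le> real 32 * real n"
      by (intro exI[of _ "?encode (left_rexp ?W)"] exI[of _ "?encode (right_rexp ?W)"] conjI)
        (simp_all only: L1_def L2_def lang_hom_rexp_rename rpn_len_hom_rexp real_le_mult_of_nat_le)
    have "real n powr (1 / 64 * ln (real n)) \<le> real (rpn (L1 n \<inter> L2 n))"
    proof (rule order.trans[OF bound], unfold of_nat_le_iff)
      have "rpn (L1 n \<inter> L2 n) = rpn (lang (left_rexp ?W) \<inter> lang (right_rexp ?W))"
        unfolding L1_def L2_def image_Int[OF inj_mapI[OF inj_to_nat], symmetric]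
        by (rule rpn_map_inj[OF inj_to_nat])
      then show "?W ^ floor_log ?W \<le> rpn (L1 n \<inter> L2 n)" using rpn_left_Int_right_ge[OF W] by simp
    qed
    moreover have "real n powr (1 / 64 * ln (real n)) \<le> real (rpn (shuffle_lang (L1 n) (L2 n)))"
    proof (rule order.trans[OF bound], unfold of_nat_le_iff)
      have "rpn (shuffle_lang (L1 n) (L2 n)) =
          rpn (shuffle_lang (lang (left_rexp ?W)) (lang (right_rexp ?W)))"
        unfolding L1_def L2_def shuffle_lang_map by (rule rpn_map_inj[OF inj_to_nat])
      then show "?W ^ floor_log ?W \<le> rpn (shuffle_lang (L1 n) (L2 n))"
        using rpn_shuffle_left_right_ge[OF W] by simp
    qed
    ultimately show ?thesis using fin ex by (simp only: simp_thms)
  qed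
  show ?thesis
  proof (rule exI[of _ L1], rule exI[of _ L2], rule exI[of _ "real 32"],
      rule exI[of _ "1 / 64 :: real"], rule conjI)
    show "(0::real) < 1 / 64" by simp
  qed (rule eventually_sequentiallyI, rule pointwise)
qed

lemma length_slice_blowup:
  "\<exists>(L :: nat \<Rightarrow> nat list set) C c.
            c > 0 \<and>
            (\<forall>\<^sub>F n in sequentially.
               (\<exists>r. lang r = L n \<and> real (rpn_len r) \<le> C * real n) \<and>
               real (rpn {w \<in> L n. length w = n}) \<ge> real n powr (c * ln (real n)))"
proof -
  define L where "L n = map to_nat ` lang (pads_star_rexp (scale n) (scale n))" for n
  let ?encode = "hom_rexp (\<lambda>a. Some (Some (to_nat a)))"
  have pointwise: "(\<exists>r. lang r = L n \<and> real (rpn_len r) \<le> real 32 * real n) \<and>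
      real (rpn {w \<in> L n. length w = n}) \<ge> real n powr (1 / 64 * ln (real n))"
    if n: "256 \<le> n" for n
  proof -
    let ?W = "scale n"
    have W: "0 < ?W" by (rule scale_pos)
    have size: "?W ^ 4 \<le> n" using scale_pow4_le[of n] n by simp
    have "rpn_len (pads_star_rexp ?W ?W) \<le> 32 * n"
      using rpn_len_pads_star_rexp[OF W] size by linarith
    then have ex: "\<exists>r. lang r = L n \<and> real (rpn_len r) \<le> real 32 * real n"
      by (intro exI[of _ "?encode (pads_star_rexp ?W ?W)"] conjI)
        (simp_all only: L_def lang_hom_rexp_rename rpn_len_hom_rexp real_le_mult_of_nat_le)
    have "?W * ?W \<le> n" using pow_le_pow4[OF W, of 2] size by (simp add: power2_eq_square)
    then have "?W ^ floor_log ?W \<le> rpn {w \<in> L n. length w = n}"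
      using rpn_length_slice_ge[OF W] unfolding L_def map_image_length_slice rpn_map_inj[OF inj_to_nat]
      by blast
    then have "real n powr (1 / 64 * ln (real n)) \<le> real (rpn {w \<in> L n. length w = n})"
      by (intro order.trans[OF powr_le_scale_power[OF n]]) (simp only: of_nat_le_iff)
    with ex show ?thesis by (simp only: simp_thms)
  qed
  show ?thesis
  proof (rule exI[of _ L], rule exI[of _ "real 32"], rule exI[of _ "1 / 64 :: real"], rule conjI)
    show "(0::real) < 1 / 64" by simp
  qed (rule eventually_sequentiallyI, rule pointwise)
qed

theorem theorem5p5:
  shows "(\<exists>(L1 :: nat \<Rightarrow> nat list set) (L2 :: nat \<Rightarrow> nat list set) C c.
            c > 0 \<and>
            (\<forall>\<^sub>F n in sequentially.
               finite (L1 n) \<and> finite (L2 n) \<and>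
               (\<exists>r1 r2. lang r1 = L1 n \<and> lang r2 = L2 n \<and>
                   real (rpn_len r1) \<le> C * real n \<and> real (rpn_len r2) \<le> C * real n) \<and>
               real (rpn (L1 n \<inter> L2 n)) \<ge> real n powr (c * ln (real n)) \<and>
               real (rpn (shuffle_lang (L1 n) (L2 n))) \<ge> real n powr (c * ln (real n))))
       \<and>
         (\<exists>(L :: nat \<Rightarrow> nat list set) C c.
            c > 0 \<and>
            (\<forall>\<^sub>F n in sequentially.
               (\<exists>r. lang r = L n \<and> real (rpn_len r) \<le> C * real n) \<and>
               real (rpn {w \<in> L n. length w = n}) \<ge> real n powr (c * ln (real n))))"
  using intersection_and_shuffle_blowup length_slice_blowup by (rule conjI)

end
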